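(* Let $r\ge0$ be an integer and let $J\subseteq\mathbb{N}_0$ be either $J=\{0,\dots,N-1\}$ for some $N\in\mathbb{N}$ or $J=\mathbb{N}_0$. Let $\mathcal{X}$ be the determinantal point process on $\mathbb{C}$ with correlation kernel $$K_{r,J}(z,z')=e^{-\frac{\pi}{2}(|z|^2+|z'|^2)}\sum_{j\in J}H_{j,r}(z,\overline z)\,\overline{H_{j,r}(z',\overline{z'})}.$$ Then the family $\{D_R:R>0\}$ of all disks in $\mathbb{C}$ centered at the origin is simultaneously observable for $\mathcal{X}$.
   Context: Laguerre polynomials: $L_j^{\alpha}(x)=\sum_{i=0}^{j}(-1)^i\binom{j+\alpha}{j-i}\frac{x^i}{i!}$. Complex Hermite polynomials: $H_{j,r}(z,\overline z)=\sqrt{\frac{r!}{j!}}\pi^{\frac{j-r}{2}}z^{j-r}L_r^{j-r}(\pi|z|^2)$ if $j>r$, and $H_{j,r}(z,\overline z)=(-1)^{r-j}\sqrt{\frac{j!}{r!}}\pi^{\frac{r-j}{2}}\overline{z}^{\,r-j}L_j^{r-j}(\pi|z|^2)$ if $j\le r$. For a determinantal point process with Hermitian locally trace-class kernel $K$ (whose integral operator $P_K$ is an orthogonal projection here), and a measurable set $\Omega$, the restriction operator is $T_\Omega F=1_\Omega\,P_K(1_\Omega F)$ on $L^2(\mathbb{C})$. A family of sets $\{\Omega_\gamma:\gamma\in\Gamma\}$ is simultaneously observable for the process if, with $\Omega=\bigcup_\gamma\Omega_\gamma$, there is an orthogonal basis $\{\varphi_j:j\in J'\}$ of the closure of the range of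 $T_\Omega$ consisting of eigenfunctions of $T_\Omega$ such that for each $\gamma\in\Gamma$ the restricted functions $\{\varphi_j|_{\Omega_\gamma}:j\in J'\}$ are mutually orthogonal in $L^2(\Omega_\gamma)$. *)

theory Defs
  imports "HOL-Analysis.Analysis"
begin

definition laguerre :: "nat \<Rightarrow> nat \<Rightarrow> real \<Rightarrow> real" where
  "laguerre j \<alpha> x = (\<Sum>i\<le>j. (-1)^i * real ((j + \<alpha>) choose (j - i)) * x ^ i / fact i)"

definition cHermite :: "nat \<Rightarrow> nat \<Rightarrow> complex \<Rightarrow> complex" where
  "cHermite j r z =
     (if j > r then
        complex_of_real (sqrt (fact r / fact j) * pi powr (real (j - r) / 2)
          * laguerre r (j - r) (pi * (cmod z)^2)) * z ^ (j - r)
      else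
        complex_of_real ((-1) ^ (r - j) * sqrt (fact j / fact r) * pi powr (real (r - j) / 2)
          * laguerre j (r - j) (pi * (cmod z)^2)) * (cnj z) ^ (r - j))"

definition kernelK :: "nat \<Rightarrow> nat set \<Rightarrow> complex \<Rightarrow> complex \<Rightarrow> complex" where
  "kernelK r J z w =
     complex_of_real (exp (- pi / 2 * ((cmod z)^2 + (cmod w)^2)))
     * (\<Sum>\<^sub>\<infinity>j\<in>J. cHermite j r z * cnj (cHermite j r w))"

section \<open>L^2(C) (with respect to Lebesgue measure), on representatives\<close>

definition L2 :: "(complex \<Rightarrow> complex) set" where
  "L2 = {f. f \<in> borel_measurable lborel \<and> integrable lborel (\<lambda>z. (cmod (f z))^2)}"

definition L2_inner_on :: "complex set \<Rightarrow> (complex \<Rightarrow> complex) \<Rightarrow> (complex \<Rightarrow> complex) \<Rightarrow> complex" where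
  "L2_inner_on A f g = (LINT z|lborel. indicator A z * (f z * cnj (g z)))"

definition L2_inner :: "(complex \<Rightarrow> complex) \<Rightarrow> (complex \<Rightarrow> complex) \<Rightarrow> complex" where
  "L2_inner f g = (LINT z|lborel. f z * cnj (g z))"

definition L2_norm :: "(complex \<Rightarrow> complex) \<Rightarrow> real" where
  "L2_norm f = sqrt (LINT z|lborel. (cmod (f z))^2)"

definition intop :: "(complex \<Rightarrow> complex \<Rightarrow> complex) \<Rightarrow> (complex \<Rightarrow> complex) \<Rightarrow> (complex \<Rightarrow> complex)" where
  "intop K F = (\<lambda>z. LINT w|lborel. K z w * F w)"

definition restr_op :: "(complex \<Rightarrow> complex \<Rightarrow> complex) \<Rightarrow> complex set \<Rightarrow> (complex \<Rightarrow> complex) \<Rightarrow> (complex \<Rightarrow> complex)" where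
  "restr_op K \<Omega> F = (\<lambda>z. indicator \<Omega> z * intop K (\<lambda>w. indicator \<Omega> w * F w) z)"

definition range_closure :: "((complex \<Rightarrow> complex) \<Rightarrow> (complex \<Rightarrow> complex)) \<Rightarrow> (complex \<Rightarrow> complex) set" where
  "range_closure T = {F \<in> L2. \<forall>e>0. \<exists>G\<in>L2. L2_norm (\<lambda>z. F z - T G z) < e}"

definition eigenfunction :: "((complex \<Rightarrow> complex) \<Rightarrow> (complex \<Rightarrow> complex)) \<Rightarrow> (complex \<Rightarrow> complex) \<Rightarrow> bool" where
  "eigenfunction T \<phi> \<longleftrightarrow> \<phi> \<in> L2 \<and> \<not> (AE z in lborel. \<phi> z = 0)
      \<and> (\<exists>c. AE z in lborel. T \<phi> z = c * \<phi> z)"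

definition orth_basis_of :: "(complex \<Rightarrow> complex) set \<Rightarrow> (complex \<Rightarrow> complex) set \<Rightarrow> bool" where
  "orth_basis_of B V \<longleftrightarrow> B \<subseteq> V
     \<and> (\<forall>\<phi>\<in>B. \<not> (AE z in lborel. \<phi> z = 0))
     \<and> (\<forall>\<phi>\<in>B. \<forall>\<psi>\<in>B. \<phi> \<noteq> \<psi> \<longrightarrow> L2_inner \<phi> \<psi> = 0)
     \<and> (\<forall>F\<in>V. \<forall>e>0. \<exists>S c. finite S \<and> S \<subseteq> B \<and>
            L2_norm (\<lambda>z. F z - (\<Sum>\<phi>\<in>S. c \<phi> * \<phi> z)) < e)"

definition simultaneously_observable :: "(complex \<Rightarrow> complex \<Rightarrow> complex) \<Rightarrow> complex set set \<Rightarrow> bool" where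
  "simultaneously_observable K \<F> \<longleftrightarrow>
     (let \<Omega> = \<Union>\<F>; T = restr_op K \<Omega> in
      \<exists>B. orth_basis_of B (range_closure T) \<and> (\<forall>\<phi>\<in>B. eigenfunction T \<phi>)
        \<and> (\<forall>A\<in>\<F>. \<forall>\<phi>\<in>B. \<forall>\<psi>\<in>B. \<phi> \<noteq> \<psi> \<longrightarrow> L2_inner_on A \<phi> \<psi> = 0))"

end

theory Submission
  imports Defs "HOL-Probability.Distributions"
begin

text \<open>The functions \<open>\<phi>\<^sub>j(z) = e\<^sup>-\<^sup>\<pi>\<^sup>|\<^sup>z\<^sup>|\<^sup>2\<^sup>/\<^sup>2 H\<^sub>j\<^sub>,\<^sub>r(z, z\<^sup>-)\<close> form an orthonormal sequence in
  \<open>L\<^sup>2(\<complex>)\<close>: in polar coordinates \<open>|\<phi>\<^sub>j|\<^sup>2\<close> integrates to the classical normalisation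
  \<open>\<integral>\<^sub>0\<^sup>\<infinity> t\<^sup>\<alpha> L\<^sub>m\<^sup>\<alpha>(t)\<^sup>2 e\<^sup>-\<^sup>t dt = (m+\<alpha>)!/m!\<close>, while \<open>\<phi>\<^sub>j(u z) = u\<^sup>j\<^sup>-\<^sup>r \<phi>\<^sub>j(z)\<close> for \<open>|u| = 1\<close> and
  rotation invariance of Lebesgue measure make \<open>\<phi>\<^sub>j\<close> and \<open>\<phi>\<^sub>k\<close> (\<open>j \<noteq> k\<close>) orthogonal on every
  rotation-invariant set, in particular on every disk \<open>D\<^sub>R\<close>.

  The kernel is \<open>K(z,w) = \<Sum>\<^sub>j\<^sub>\<in>\<^sub>J \<phi>\<^sub>j(z) conj \<phi>\<^sub>j(w)\<close>, absolutely convergent pointwise. The disks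
  cover \<open>\<complex>\<close>, so \<open>T\<^sub>\<Omega>\<close> is the integral operator of \<open>K\<close>, which maps \<open>G\<close> to
  \<open>\<Sum>\<^sub>j\<^sub>\<in>\<^sub>J \<langle>G, \<phi>\<^sub>j\<rangle> \<phi>\<^sub>j\<close>. Hence each \<open>\<phi>\<^sub>j\<close>, \<open>j \<in> J\<close>, is an eigenfunction (eigenvalue 1), and by
  Bessel's inequality their span is dense in the closure of the range: \<open>{\<phi>\<^sub>j | j \<in> J}\<close> is the
  required basis. The argument works for every \<open>J \<subseteq> \<nat>\<close>.\<close>

section \<open>Lebesgue measure on the complex plane\<close>

abbreviation lborel2 :: "(real \<times> real) measure" where
  "lborel2 \<equiv> lborel \<Otimes>\<^sub>M lborel"

lemma measurable_case_prod_Complex [measurable]: "case_prod Complex \<in> borel_measurable lborel2"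
proof -
  have "case_prod Complex = (\<lambda>p. complex_of_real (fst p) + \<i> * complex_of_real (snd p))"
    by (auto simp: fun_eq_iff complex_eq_iff)
  then show ?thesis by simp
qed

lemma distr_lborel2_Complex: "distr lborel2 borel (case_prod Complex) = lborel"
proof (rule lborel_eqI[symmetric])
  fix l u :: complex
  assume le: "\<And>b. b \<in> Basis \<Longrightarrow> l \<bullet> b \<le> u \<bullet> b"
  have pre: "case_prod Complex -` box l u \<inter> space lborel2 = {Re l<..<Re u} \<times> {Im l<..<Im u}"
    by (auto simp: box_def Basis_complex_def inner_complex_def space_pair_measure)
  have "Re l \<le> Re u" "Im l \<le> Im u"
    using le[of 1] le[of \<i>] by (auto simp: inner_complex_def)
  then show "emeasure (distr lborel2 borel (case_prod Complex)) (box l u) =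
      ennreal (\<Prod>b\<in>Basis. (u - l) \<bullet> b)"
    by (simp add: emeasure_distr pre lborel.emeasure_pair_measure_Times Basis_complex_def
        inner_complex_def ennreal_mult)
qed simp

lemma distr_self_eqI:
  assumes S [measurable]: "S \<in> M \<rightarrow>\<^sub>M M"
    and eq: "\<And>g. g \<in> borel_measurable M \<Longrightarrow> (\<integral>\<^sup>+x. g (S x) \<partial>M) = (\<integral>\<^sup>+x. g x \<partial>M)"
  shows "distr M M S = M"
proof (rule measure_eqI)
  fix A assume "A \<in> sets (distr M M S)"
  then have A [measurable]: "A \<in> sets M" by simp
  have "emeasure (distr M M S) A = emeasure M (S -` A \<inter> space M)"
    by (simp add: emeasure_distr)
  also have "\<dots> = (\<integral>\<^sup>+x. indicator (S -` A \<inter> space M) x \<partial>M)"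
    using measurable_sets[OF S A] by simp
  also have "\<dots> = (\<integral>\<^sup>+x. indicator A (S x) \<partial>M)"
    by (intro nn_integral_cong) (auto split: split_indicator)
  also have "\<dots> = emeasure M A"
    by (simp add: eq)
  finally show "emeasure (distr M M S) A = emeasure M A" .
qed simp

lemma distr_lborel2_shear_fst: "distr lborel2 lborel2 (\<lambda>(x, y). (x + a * y, y)) = lborel2"
proof (rule distr_self_eqI)
  fix g :: "real \<times> real \<Rightarrow> ennreal" assume [measurable]: "g \<in> borel_measurable lborel2"
  have "(\<integral>\<^sup>+p. g ((\<lambda>(x, y). (x + a * y, y)) p) \<partial>lborel2) = (\<integral>\<^sup>+y. \<integral>\<^sup>+x. g (x + a * y, y) \<partial>lborel \<partial>lborel)"
    by (subst lborel_pair.nn_integral_snd[symmetric]) (auto simp: case_prod_beta')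
  also have "\<dots> = (\<integral>\<^sup>+y. \<integral>\<^sup>+x. g (x, y) \<partial>lborel \<partial>lborel)"
    using nn_integral_real_affine[of "\<lambda>x. g (x, y)" 1 "a * y" for y] by (simp add: add.commute)
  also have "\<dots> = (\<integral>\<^sup>+p. g p \<partial>lborel2)"
    by (subst lborel_pair.nn_integral_snd[symmetric]) auto
  finally show "(\<integral>\<^sup>+p. g ((\<lambda>(x, y). (x + a * y, y)) p) \<partial>lborel2) = (\<integral>\<^sup>+p. g p \<partial>lborel2)" .
qed (simp add: measurable_pair_iff case_prod_beta')

lemma distr_lborel2_shear_snd: "distr lborel2 lborel2 (\<lambda>(x, y). (x, y + b * x)) = lborel2"
proof (rule distr_self_eqI)
  fix g :: "real \<times> real \<Rightarrow> ennreal" assume [measurable]: "g \<in> borel_measurable lborel2"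
  have "(\<integral>\<^sup>+p. g ((\<lambda>(x, y). (x, y + b * x)) p) \<partial>lborel2) = (\<integral>\<^sup>+x. \<integral>\<^sup>+y. g (x, y + b * x) \<partial>lborel \<partial>lborel)"
    by (subst lborel.nn_integral_fst[symmetric]) (auto simp: case_prod_beta')
  also have "\<dots> = (\<integral>\<^sup>+x. \<integral>\<^sup>+y. g (x, y) \<partial>lborel \<partial>lborel)"
    using nn_integral_real_affine[of "\<lambda>y. g (x, y)" 1 "b * x" for x] by (simp add: add.commute)
  also have "\<dots> = (\<integral>\<^sup>+p. g p \<partial>lborel2)"
    by (subst lborel.nn_integral_fst[symmetric]) auto
  finally show "(\<integral>\<^sup>+p. g ((\<lambda>(x, y). (x, y + b * x)) p) \<partial>lborel2) = (\<integral>\<^sup>+p. g p \<partial>lborel2)" .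
qed (simp add: measurable_pair_iff case_prod_beta')

text \<open>A rotation other than the half-turn is a product of three shears, with parameter
  \<open>t = s / (1 + c)\<close> (the tangent of half the angle).\<close>
lemma distr_lborel2_rotation:
  fixes c s :: real
  assumes cs: "c\<^sup>2 + s\<^sup>2 = 1" and c: "c \<noteq> -1"
  shows "distr lborel2 lborel2 (\<lambda>(x, y). (c * x - s * y, s * x + c * y)) = lborel2"
proof -
  define t where "t = s / (1 + c)"
  have "\<bar>c\<bar> \<le> 1"
    using cs by (simp add: abs_square_le_1[symmetric]) (metis le_add_same_cancel1 zero_le_power2)
  with c have c1: "1 + c > 0" by linarith
  have st: "s * t = 1 - c"
  proof -
    have "s * t = (1 - c) * (1 + c) / (1 + c)"
      using cs by (simp add: t_def power2_eq_square algebra_simps)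
    then show ?thesis using c1 by simp
  qed
  have tt: "2 * t - s * t\<^sup>2 = s"
  proof -
    have "2 * t - s * t\<^sup>2 = t * (2 - s * t)" by (simp add: power2_eq_square algebra_simps)
    also have "\<dots> = t * (1 + c)" by (simp add: st)
    finally have "2 * t - s * t\<^sup>2 = t * (1 + c)" .
    then show ?thesis using c1 by (simp add: t_def)
  qed
  define S1 where "S1 = (\<lambda>(x :: real, y :: real). (x + (- t) * y, y))"
  define S2 where "S2 = (\<lambda>(x :: real, y :: real). (x, y + s * x))"
  have [measurable]: "S1 \<in> lborel2 \<rightarrow>\<^sub>M lborel2" "S2 \<in> lborel2 \<rightarrow>\<^sub>M lborel2"
    unfolding S1_def S2_def by (simp_all add: measurable_pair_iff case_prod_beta')
  have "S1 \<circ> S2 \<circ> S1 = (\<lambda>(x, y). (x * (1 - s * t) - y * (2 * t - s * t\<^sup>2), s * x + y * (1 - s * t)))"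
    by (auto simp: S1_def S2_def fun_eq_iff algebra_simps power2_eq_square)
  also have "\<dots> = (\<lambda>(x, y). (c * x - s * y, s * x + c * y))"
    unfolding tt by (simp add: st mult.commute)
  finally have eq: "S1 \<circ> S2 \<circ> S1 = (\<lambda>(x, y). (c * x - s * y, s * x + c * y))" .
  have "distr lborel2 lborel2 (S1 \<circ> S2 \<circ> S1) = distr (distr (distr lborel2 lborel2 S1) lborel2 S2) lborel2 S1"
    by (simp add: distr_distr comp_assoc)
  also have "\<dots> = lborel2"
    using distr_lborel2_shear_fst[of "- t"] distr_lborel2_shear_snd[of s]
    by (simp only: S1_def S2_def)
  finally show ?thesis by (simp add: eq)
qed

lemma distr_lborel_mult_unit:
  fixes u :: complex
  assumes u: "cmod u = 1"
  shows "distr lborel borel ((*) u) = lborel"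
proof -
  have rotation: "distr lborel borel ((*) v) = lborel" if v: "cmod v = 1" "v \<noteq> -1" for v :: complex
  proof -
    have cs: "(Re v)\<^sup>2 + (Im v)\<^sup>2 = 1" using v(1) by (simp add: cmod_def)
    have c: "Re v \<noteq> -1"
      using cs v(2) by (auto simp: complex_eq_iff)
    define R where "R = (\<lambda>(x, y). (Re v * x - Im v * y, Im v * x + Re v * y))"
    have [measurable]: "R \<in> lborel2 \<rightarrow>\<^sub>M lborel2"
      unfolding R_def by (simp add: measurable_pair_iff case_prod_beta')
    have comp: "(*) v \<circ> case_prod Complex = case_prod Complex \<circ> R"
      by (auto simp: fun_eq_iff R_def complex_eq_iff)
    have "distr lborel borel ((*) v) = distr lborel2 borel ((*) v \<circ> case_prod Complex)"
      by (subst distr_lborel2_Complex[symmetric], subst distr_distr) auto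
    also have "\<dots> = distr (distr lborel2 lborel2 R) borel (case_prod Complex)"
      by (simp add: comp distr_distr)
    also have "\<dots> = lborel"
      unfolding R_def by (simp add: distr_lborel2_rotation[OF cs c] distr_lborel2_Complex)
    finally show ?thesis .
  qed
  show ?thesis
  proof (cases "u = -1")
    case True
    have "(*) u = (*) \<i> \<circ> (*) \<i>" by (auto simp: True fun_eq_iff)
    then have "distr lborel borel ((*) u) = distr (distr lborel borel ((*) \<i>)) borel ((*) \<i>)"
      by (simp add: distr_distr)
    moreover have "distr lborel borel ((*) \<i>) = lborel"
      by (rule rotation) (auto simp: complex_eq_iff)
    ultimately show ?thesis by simp
  qed (use rotation u in auto)
qed

lemma integral_lborel_mult_unit:
  fixes f :: "complex \<Rightarrow> 'a :: {banach, second_countable_topology}"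
  assumes "cmod u = 1" and [measurable]: "f \<in> borel_measurable borel"
  shows "(LINT z|lborel. f (u * z)) = (LINT z|lborel. f z)"
  by (subst (2) distr_lborel_mult_unit[OF assms(1), symmetric]) (simp add: integral_distr)

lemma integral_eq_0_if_rotation_covariant:
  fixes f :: "complex \<Rightarrow> complex"
  assumes [measurable]: "f \<in> borel_measurable borel"
    and "cmod u = 1" and covariant: "\<And>z. f (u * z) = c * f z" and "c \<noteq> 1"
  shows "(LINT z|lborel. f z) = 0"
proof -
  have "(LINT z|lborel. f z) = c * (LINT z|lborel. f z)"
    using integral_lborel_mult_unit[of u f] assms by (simp add: covariant)
  with \<open>c \<noteq> 1\<close> show ?thesis by (metis mult_cancel_right2)
qed

section \<open>Integrals of radial functions\<close>

lemma nn_integral_Ici_eq_SUP_Icc: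
  fixes h :: "real \<Rightarrow> real" and B :: "nat \<Rightarrow> real"
  assumes [measurable]: "h \<in> borel_measurable borel" and h_nonneg: "\<And>x. h x \<ge> 0"
    and "mono B" and unbounded: "\<And>x. \<exists>n. x \<le> B n"
  shows "(\<integral>\<^sup>+x. ennreal (h x) * indicator {0..} x \<partial>lborel) =
         (SUP n. \<integral>\<^sup>+x. ennreal (h x * indicator {0..B n} x) \<partial>lborel)"
proof -
  let ?f = "\<lambda>n x. ennreal (h x * indicator {0..B n} x)"
  have inc: "incseq ?f"
    using \<open>mono B\<close> h_nonneg
    by (auto simp: incseq_def le_fun_def mono_def split: split_indicator intro: order_trans)
  have "(SUP n. ?f n x) = ennreal (h x) * indicator {0..} x" for x
  proof (rule LIMSEQ_unique[OF LIMSEQ_SUP])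
    show "incseq (\<lambda>n. ?f n x)" using inc by (auto simp: incseq_def le_fun_def)
    obtain n where n: "x \<le> B n" using unbounded by blast
    have "\<forall>\<^sub>F m in sequentially. ?f m x = ennreal (h x) * indicator {0..} x"
      using n \<open>mono B\<close> by (auto simp: eventually_sequentially monoD intro!: exI[of _ n]
          split: split_indicator dest: monoD[of B n] intro: order_trans)
    then show "(\<lambda>m. ?f m x) \<longlonglongrightarrow> ennreal (h x) * indicator {0..} x"
      by (rule tendsto_eventually)
  qed
  then have "(\<integral>\<^sup>+x. ennreal (h x) * indicator {0..} x \<partial>lborel) = (\<integral>\<^sup>+x. (SUP n. ?f n x) \<partial>lborel)"
    by simp
  also have "\<dots> = (SUP n. \<integral>\<^sup>+x. ?f n x \<partial>lborel)"
    by (rule nn_integral_monotone_convergence_SUP[OF inc]) simp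
  finally show ?thesis .
qed

lemma nn_integral_Ici_substitution_square:
  fixes f :: "real \<Rightarrow> real"
  assumes "a > 0" and [measurable]: "f \<in> borel_measurable borel" and f_nonneg: "\<And>x. f x \<ge> 0"
  shows "(\<integral>\<^sup>+x. ennreal (2 * a * x * f (a * x\<^sup>2)) * indicator {0..} x \<partial>lborel) =
         (\<integral>\<^sup>+u. ennreal (f u) * indicator {0..} u \<partial>lborel)"
proof -
  let ?g = "\<lambda>x. if x \<ge> 0 then 2 * a * x * f (a * x\<^sup>2) else 0"
  have bounded: "(\<integral>\<^sup>+u. ennreal (f u * indicator {0..a * (real n)\<^sup>2} u) \<partial>lborel) =
        (\<integral>\<^sup>+x. ennreal (?g x * indicator {0..real n} x) \<partial>lborel)" for n
  proof -
    have "(\<integral>\<^sup>+u. ennreal (f u * indicator {(\<lambda>x. a * x\<^sup>2) 0..(\<lambda>x. a * x\<^sup>2) (real n)} u) \<partial>lborel) =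
        (\<integral>\<^sup>+x. ennreal (f ((\<lambda>x. a * x\<^sup>2) x) * (2 * a * x) * indicator {0..real n} x) \<partial>lborel)"
      by (rule nn_integral_substitution[where g' = "\<lambda>x. 2 * a * x"])
         (use \<open>a > 0\<close> in \<open>auto intro!: derivative_eq_intros continuous_intros
           simp: set_borel_measurable_def\<close>)
    also have "\<dots> = (\<integral>\<^sup>+x. ennreal (?g x * indicator {0..real n} x) \<partial>lborel)"
      by (intro nn_integral_cong) (auto simp: mult_ac split: split_indicator)
    finally show ?thesis by simp
  qed
  have unbounded: "\<exists>n. x \<le> a * (real n)\<^sup>2" for x
  proof -
    obtain n :: nat where n: "x / a \<le> real n" "1 \<le> real n"
      by (metis real_arch_simple max.bounded_iff of_nat_1 nat_le_real_less of_nat_max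
          linorder_le_cases)
    have "x \<le> a * real n" using n \<open>a > 0\<close> by (simp add: divide_le_eq mult.commute)
    also have "\<dots> \<le> a * (real n)\<^sup>2" using n \<open>a > 0\<close> by (simp add: power2_eq_square)
    finally show ?thesis by blast
  qed
  have "(\<integral>\<^sup>+u. ennreal (f u) * indicator {0..} u \<partial>lborel) =
      (SUP n. \<integral>\<^sup>+u. ennreal (f u * indicator {0..a * (real n)\<^sup>2} u) \<partial>lborel)"
    using \<open>a > 0\<close> f_nonneg unbounded
    by (intro nn_integral_Ici_eq_SUP_Icc) (auto simp: mono_def intro!: mult_left_mono power_mono)
  also have "\<dots> = (SUP n. \<integral>\<^sup>+x. ennreal (?g x * indicator {0..real n} x) \<partial>lborel)"
    by (simp only: bounded)
  also have "\<dots> = (\<integral>\<^sup>+x. ennreal (?g x) * indicator {0..} x \<partial>lborel)"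
    using \<open>a > 0\<close> f_nonneg real_arch_simple
    by (intro nn_integral_Ici_eq_SUP_Icc[symmetric]) (auto simp: mono_def)
  also have "\<dots> = (\<integral>\<^sup>+x. ennreal (2 * a * x * f (a * x\<^sup>2)) * indicator {0..} x \<partial>lborel)"
    by (intro nn_integral_cong) (auto split: split_indicator)
  finally show ?thesis ..
qed

lemma nn_integral_even:
  fixes h :: "real \<Rightarrow> ennreal"
  assumes [measurable]: "h \<in> borel_measurable borel" and even: "\<And>x. h (- x) = h x"
  shows "(\<integral>\<^sup>+x. h x \<partial>lborel) = 2 * (\<integral>\<^sup>+x. h x * indicator {0..} x \<partial>lborel)"
proof -
  have "(\<integral>\<^sup>+x. h x \<partial>lborel) = (\<integral>\<^sup>+x. h x * indicator {0..} x + h x * indicator {..0} x \<partial>lborel)"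
    by (intro nn_integral_cong_AE AE_I[where N = "{0}"]) (auto split: split_indicator)
  also have "\<dots> = (\<integral>\<^sup>+x. h x * indicator {0..} x \<partial>lborel) + (\<integral>\<^sup>+x. h x * indicator {..0} x \<partial>lborel)"
    by (rule nn_integral_add) auto
  also have "(\<integral>\<^sup>+x. h x * indicator {..0} x \<partial>lborel) = (\<integral>\<^sup>+x. h x * indicator {0..} x \<partial>lborel)"
    using nn_integral_real_affine[of "\<lambda>x. h x * indicator {..0} x" "-1" 0]
    by (auto simp: even intro!: nn_integral_cong split: split_indicator)
  finally show ?thesis by (simp add: mult_2)
qed

lemma nn_integral_Ici_sum_squares_scaled:
  fixes f :: "real \<Rightarrow> real"
  assumes "x > 0" and [measurable]: "f \<in> borel_measurable borel"
  shows "(\<integral>\<^sup>+y. ennreal (f (x\<^sup>2 + y\<^sup>2)) * indicator {0..} y \<partial>lborel) =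
         (\<integral>\<^sup>+s. ennreal (x * f (x\<^sup>2 * (1 + s\<^sup>2))) * indicator {0..} s \<partial>lborel)"
proof -
  have "(\<integral>\<^sup>+y. ennreal (f (x\<^sup>2 + y\<^sup>2)) * indicator {0..} y \<partial>lborel) =
      ennreal x * (\<integral>\<^sup>+s. ennreal (f (x\<^sup>2 + (x * s)\<^sup>2)) * indicator {0..} (x * s) \<partial>lborel)"
    using nn_integral_real_affine[of "\<lambda>y. ennreal (f (x\<^sup>2 + y\<^sup>2)) * indicator {0..} y" x 0] \<open>x > 0\<close>
    by simp
  also have "\<dots> = (\<integral>\<^sup>+s. ennreal (x * f (x\<^sup>2 * (1 + s\<^sup>2))) * indicator {0..} s \<partial>lborel)"
    using \<open>x > 0\<close> by (subst nn_integral_cmult[symmetric])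
      (auto intro!: nn_integral_cong simp: ennreal_mult' algebra_simps power2_eq_square
        zero_le_mult_iff split: split_indicator)
  finally show ?thesis .
qed

lemma nn_integral_Ici_mult_scaled_square:
  fixes f :: "real \<Rightarrow> real"
  assumes "b > 0" and [measurable]: "f \<in> borel_measurable borel" and f_nonneg: "\<And>x. f x \<ge> 0"
  shows "(\<integral>\<^sup>+x. ennreal (x * f (x\<^sup>2 * b)) * indicator {0..} x \<partial>lborel) =
         ennreal (1 / (2 * b)) * (\<integral>\<^sup>+u. ennreal (f u) * indicator {0..} u \<partial>lborel)"
    (is "?J = _ * ?I")
proof -
  have "?I = (\<integral>\<^sup>+x. ennreal (2 * b * x * f (b * x\<^sup>2)) * indicator {0..} x \<partial>lborel)"
    by (rule nn_integral_Ici_substitution_square[symmetric, OF \<open>b > 0\<close>]) (use f_nonneg in auto)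
  also have "\<dots> = ennreal (2 * b) * ?J"
  proof (subst nn_integral_cmult[symmetric], simp, intro nn_integral_cong)
    fix x :: real
    have "ennreal (2 * b * x * f (b * x\<^sup>2)) = ennreal (2 * b) * ennreal (x * f (x\<^sup>2 * b))" if "x \<ge> 0"
      using \<open>b > 0\<close> that f_nonneg by (subst ennreal_mult[symmetric]) (auto simp: mult_ac)
    then show "ennreal (2 * b * x * f (b * x\<^sup>2)) * indicator {0..} x =
        ennreal (2 * b) * (ennreal (x * f (x\<^sup>2 * b)) * indicator {0..} x)"
      by (cases "x \<ge> 0") (simp_all add: mult.assoc)
  qed
  finally have I_eq: "?I = ennreal (2 * b) * ?J" .
  have "ennreal (1 / (2 * b)) * ennreal (2 * b) = 1"
    using \<open>b > 0\<close> by (subst ennreal_mult[symmetric]) auto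
  then show ?thesis
    unfolding I_eq mult.assoc[symmetric] by simp
qed

lemma nn_integral_Ici_half_inverse_one_plus_square:
  "(\<integral>\<^sup>+s. ennreal (1 / (2 * (1 + s\<^sup>2))) * indicator {0..} s \<partial>lborel) = ennreal (pi / 4)"
proof -
  have "((\<lambda>s. arctan s / 2) \<longlongrightarrow> pi / 2 / 2) at_top"
    by (intro tendsto_divide tendsto_arctan_at_top tendsto_const) simp
  then have "(\<integral>\<^sup>+s. ennreal (1 / (2 * (1 + s\<^sup>2))) * indicator {0..} s \<partial>lborel) = ennreal (pi / 2 / 2 - arctan 0 / 2)"
    by (rule nn_integral_FTC_atLeast[rotated 3])
       (auto intro!: derivative_eq_intros simp: add_nonneg_eq_0_iff field_simps power2_eq_square)
  then show ?thesis by simp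
qed

lemma nn_integral_quadrant_radial:
  fixes f :: "real \<Rightarrow> real"
  assumes [measurable]: "f \<in> borel_measurable borel" and f_nonneg: "\<And>x. f x \<ge> 0"
  shows "(\<integral>\<^sup>+x. (\<integral>\<^sup>+y. ennreal (f (x\<^sup>2 + y\<^sup>2)) * indicator {0..} y \<partial>lborel) * indicator {0..} x \<partial>lborel) =
         ennreal (pi / 4) * (\<integral>\<^sup>+u. ennreal (f u) * indicator {0..} u \<partial>lborel)"
    (is "?Q = _ * ?I")
proof -
  have "?Q = (\<integral>\<^sup>+x. (\<integral>\<^sup>+s. ennreal (x * f (x\<^sup>2 * (1 + s\<^sup>2))) * indicator {0..} s \<partial>lborel)
      * indicator {0..} x \<partial>lborel)"
    using AE_lborel_singleton[of 0]
    by (intro nn_integral_cong_AE, eventually_elim)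
       (auto simp: nn_integral_Ici_sum_squares_scaled split: split_indicator)
  also have "\<dots> = (\<integral>\<^sup>+x. \<integral>\<^sup>+s. ennreal (x * f (x\<^sup>2 * (1 + s\<^sup>2))) * indicator {0..} s
      * indicator {0..} x \<partial>lborel \<partial>lborel)"
    by (intro nn_integral_cong) (simp add: nn_integral_multc)
  also have "\<dots> = (\<integral>\<^sup>+s. \<integral>\<^sup>+x. ennreal (x * f (x\<^sup>2 * (1 + s\<^sup>2))) * indicator {0..} s
      * indicator {0..} x \<partial>lborel \<partial>lborel)"
    by (rule lborel_pair.Fubini'[symmetric]) auto
  also have "\<dots> = (\<integral>\<^sup>+s. (\<integral>\<^sup>+x. ennreal (x * f (x\<^sup>2 * (1 + s\<^sup>2))) * indicator {0..} x \<partial>lborel)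
      * indicator {0..} s \<partial>lborel)"
    by (intro nn_integral_cong, subst nn_integral_multc[symmetric]) (auto simp: mult_ac)
  also have "\<dots> = (\<integral>\<^sup>+s. ennreal (1 / (2 * (1 + s\<^sup>2))) * ?I * indicator {0..} s \<partial>lborel)"
  proof (intro nn_integral_cong)
    fix s :: real
    have "1 + s\<^sup>2 > 0" by (simp add: add_pos_nonneg)
    then show "(\<integral>\<^sup>+x. ennreal (x * f (x\<^sup>2 * (1 + s\<^sup>2))) * indicator {0..} x \<partial>lborel) * indicator {0..} s =
        ennreal (1 / (2 * (1 + s\<^sup>2))) * ?I * indicator {0..} s"
      using f_nonneg by (simp add: nn_integral_Ici_mult_scaled_square)
  qed
  also have "\<dots> = ?I * (\<integral>\<^sup>+s. ennreal (1 / (2 * (1 + s\<^sup>2))) * indicator {0..} s \<partial>lborel)"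
    by (subst nn_integral_cmult[symmetric]) (auto intro!: nn_integral_cong simp: mult_ac)
  also have "\<dots> = ?I * ennreal (pi / 4)"
    by (simp only: nn_integral_Ici_half_inverse_one_plus_square)
  finally show ?thesis
    by (metis mult.commute)
qed

lemma nn_integral_radial:
  fixes f :: "real \<Rightarrow> real"
  assumes [measurable]: "f \<in> borel_measurable borel" and f_nonneg: "\<And>x. f x \<ge> 0"
  shows "(\<integral>\<^sup>+z. ennreal (f ((cmod z)\<^sup>2)) \<partial>lborel) =
         ennreal pi * (\<integral>\<^sup>+u. ennreal (f u) * indicator {0..} u \<partial>lborel)"
proof -
  have "(\<integral>\<^sup>+z. ennreal (f ((cmod z)\<^sup>2)) \<partial>lborel) =
      (\<integral>\<^sup>+p. ennreal (f ((cmod (case_prod Complex p))\<^sup>2)) \<partial>lborel2)"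
    by (subst distr_lborel2_Complex[symmetric]) (simp add: nn_integral_distr)
  also have "\<dots> = (\<integral>\<^sup>+x. \<integral>\<^sup>+y. ennreal (f (x\<^sup>2 + y\<^sup>2)) \<partial>lborel \<partial>lborel)"
    by (subst lborel.nn_integral_fst[symmetric]) (auto simp: cmod_def case_prod_beta)
  also have "\<dots> = 4 * (\<integral>\<^sup>+x. (\<integral>\<^sup>+y. ennreal (f (x\<^sup>2 + y\<^sup>2)) * indicator {0..} y \<partial>lborel)
      * indicator {0..} x \<partial>lborel)"
    by (simp add: nn_integral_even[of "\<lambda>y. ennreal (f (_ + y\<^sup>2))"] nn_integral_cmult
        nn_integral_even[of "\<lambda>x. \<integral>\<^sup>+y. ennreal (f (x\<^sup>2 + y\<^sup>2)) * indicator {0..} y \<partial>lborel"])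
  also have "\<dots> = 4 * ennreal (pi / 4) * (\<integral>\<^sup>+u. ennreal (f u) * indicator {0..} u \<partial>lborel)"
    by (simp only: nn_integral_quadrant_radial[OF assms] mult.assoc)
  also have "4 * ennreal (pi / 4) = ennreal pi"
    by (simp add: ennreal_mult'[symmetric] ennreal_numeral[symmetric] del: ennreal_numeral)
  finally show ?thesis .
qed

section \<open>Orthogonality of Laguerre polynomials\<close>

lemma laguerre_moment_term:
  "(-1) ^ i * real ((m + \<alpha>) choose (m - i)) * (fact (\<alpha> + i + l) / fact i) =
   fact (\<alpha> + l) * ((- of_nat (\<alpha> + l + 1) gchoose i) * (of_nat (m + \<alpha>) gchoose (m - i)) :: real)"
proof -
  have "real ((\<alpha> + l + i) choose i) = fact (\<alpha> + l + i) / (fact i * fact (\<alpha> + l))"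
    by (subst binomial_fact) auto
  then have "fact (\<alpha> + i + l) / fact i = (fact (\<alpha> + l) :: real) * real ((\<alpha> + l + i) choose i)"
    by (simp add: field_simps add_ac)
  moreover have "(- of_nat (\<alpha> + l + 1) :: real) gchoose i = (-1) ^ i * real ((\<alpha> + l + i) choose i)"
    by (subst gbinomial_minus) (simp add: binomial_gbinomial add_ac)
  ultimately show ?thesis
    by (simp add: binomial_gbinomial)
qed

text \<open>This is \<open>\<integral>\<^sub>0\<^sup>\<infinity> t\<^sup>\<alpha>\<^sup>+\<^sup>l L\<^sub>m\<^sup>\<alpha>(t) e\<^sup>-\<^sup>t dt\<close>; it is evaluated by the Chu--Vandermonde identity.\<close>
lemma laguerre_moment_sum:
  fixes m \<alpha> l :: nat
  assumes "l \<le> m"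
  shows "(\<Sum>i\<le>m. (-1) ^ i * real ((m + \<alpha>) choose (m - i)) * (fact (\<alpha> + i + l) / fact i)) =
         (if l = m then (-1) ^ m * fact (\<alpha> + m) else 0)"
proof -
  have "(\<Sum>i\<le>m. (-1) ^ i * real ((m + \<alpha>) choose (m - i)) * (fact (\<alpha> + i + l) / fact i)) =
        fact (\<alpha> + l) * (\<Sum>i\<le>m. (- of_nat (\<alpha> + l + 1) gchoose i) * (of_nat (m + \<alpha>) gchoose (m - i)))"
    unfolding sum_distrib_left by (intro sum.cong refl laguerre_moment_term)
  also have "(\<Sum>i\<le>m. (- of_nat (\<alpha> + l + 1) gchoose i) * (of_nat (m + \<alpha>) gchoose (m - i))) =
      ((- of_nat (\<alpha> + l + 1) + of_nat (m + \<alpha>)) :: real) gchoose m"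
    using gbinomial_Vandermonde[of "- of_nat (\<alpha> + l + 1) :: real" "of_nat (m + \<alpha>)" m]
    by (simp add: atLeast0AtMost)
  also have "(- of_nat (\<alpha> + l + 1) + of_nat (m + \<alpha>) :: real) = of_nat (m - l) - 1"
    using assms by simp
  finally have eq: "(\<Sum>i\<le>m. (-1) ^ i * real ((m + \<alpha>) choose (m - i)) * (fact (\<alpha> + i + l) / fact i)) =
      fact (\<alpha> + l) * ((of_nat (m - l) - 1 :: real) gchoose m)" .
  show ?thesis
  proof (cases "l = m")
    case True
    have "(- 1 :: real) gchoose m = (-1) ^ m"
      using gbinomial_minus[of "1 :: real" m] by (simp add: binomial_gbinomial[symmetric])
    with eq True show ?thesis by (simp add: add.commute)
  next
    case False
    with assms have "(of_nat (m - l) - 1 :: real) = of_nat (m - l - 1)" "(m - l - 1) choose m = 0"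
      by (simp_all add: of_nat_diff)
    then have "((of_nat (m - l) - 1 :: real) gchoose m) = 0"
      by (metis binomial_gbinomial of_nat_0)
    with eq False show ?thesis by simp
  qed
qed

lemma laguerre_norm_sum:
  "(\<Sum>i\<le>m. \<Sum>l\<le>m. (-1) ^ (i + l) * real ((m + \<alpha>) choose (m - i)) * real ((m + \<alpha>) choose (m - l))
      * fact (\<alpha> + i + l) / (fact i * fact l)) = fact (m + \<alpha>) / fact m"
proof -
  have "(\<Sum>i\<le>m. \<Sum>l\<le>m. (-1) ^ (i + l) * real ((m + \<alpha>) choose (m - i)) * real ((m + \<alpha>) choose (m - l))
      * fact (\<alpha> + i + l) / (fact i * fact l)) =
     (\<Sum>l\<le>m. ((-1) ^ l * real ((m + \<alpha>) choose (m - l)) / fact l) *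
        (\<Sum>i\<le>m. (-1) ^ i * real ((m + \<alpha>) choose (m - i)) * (fact (\<alpha> + i + l) / fact i)))"
    by (subst sum.swap) (auto simp: sum_distrib_left power_add field_simps intro!: sum.cong)
  also have "\<dots> = (\<Sum>l\<le>m. ((-1) ^ l * real ((m + \<alpha>) choose (m - l)) / fact l) *
        (if l = m then (-1) ^ m * fact (\<alpha> + m) else 0))"
    by (intro sum.cong refl, subst laguerre_moment_sum) auto
  also have "\<dots> = fact (m + \<alpha>) / fact m"
    by (simp add: if_distrib sum.delta add.commute power_mult_distrib[symmetric] cong: if_cong)
  finally show ?thesis .
qed

definition laguerre_density :: "nat \<Rightarrow> nat \<Rightarrow> real \<Rightarrow> real" where
  "laguerre_density m \<alpha> t = fact m / fact (m + \<alpha>) * t ^ \<alpha> * (laguerre m \<alpha> t)\<^sup>2 * exp (- t)"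

lemma laguerre_density_nonneg: "t \<ge> 0 \<Longrightarrow> laguerre_density m \<alpha> t \<ge> 0"
  unfolding laguerre_density_def by (intro mult_nonneg_nonneg) auto

lemma borel_measurable_laguerre_density [measurable]:
  "laguerre_density m \<alpha> \<in> borel_measurable borel"
  unfolding laguerre_density_def laguerre_def by measurable

lemma has_bochner_integral_power_exp_Ici:
  "has_bochner_integral lborel (\<lambda>x. x ^ k * exp (- x) * indicator {0..} x :: real) (fact k)"
  using nn_intergal_power_times_exp_Ici[of k]
  by (intro has_bochner_integral_nn_integral)
     (auto simp: nn_integral_set_ennreal split: split_indicator)

lemma has_bochner_integral_laguerre_density:
  "has_bochner_integral lborel (\<lambda>t. laguerre_density m \<alpha> t * indicator {0..} t) 1"
proof -
  define a where "a i = (-1) ^ i * real ((m + \<alpha>) choose (m - i)) / fact i" for i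
  define c where "c = (fact m / fact (m + \<alpha>) :: real)"
  have "(laguerre m \<alpha> t)\<^sup>2 = (\<Sum>i\<le>m. \<Sum>l\<le>m. a i * a l * t ^ (i + l))" for t
    unfolding laguerre_def a_def power2_eq_square sum_product by (simp add: power_add mult_ac)
  then have density: "laguerre_density m \<alpha> t * indicator {0..} t =
     (\<Sum>i\<le>m. \<Sum>l\<le>m. (c * a i * a l) * (t ^ (\<alpha> + i + l) * exp (- t) * indicator {0..} t))" for t
    unfolding laguerre_density_def c_def
    by (simp add: sum_distrib_left sum_distrib_right power_add mult_ac)
  have "(\<Sum>i\<le>m. \<Sum>l\<le>m. (c * a i * a l) * fact (\<alpha> + i + l)) =
      c * (\<Sum>i\<le>m. \<Sum>l\<le>m. (-1) ^ (i + l) * real ((m + \<alpha>) choose (m - i))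
        * real ((m + \<alpha>) choose (m - l)) * fact (\<alpha> + i + l) / (fact i * fact l))"
    unfolding sum_distrib_left a_def by (intro sum.cong refl) (simp add: power_add field_simps)
  also have "\<dots> = 1"
    unfolding laguerre_norm_sum c_def by simp
  finally have "(\<Sum>i\<le>m. \<Sum>l\<le>m. (c * a i * a l) * fact (\<alpha> + i + l)) = 1" .
  moreover have "has_bochner_integral lborel
      (\<lambda>t. \<Sum>i\<le>m. \<Sum>l\<le>m. (c * a i * a l) * (t ^ (\<alpha> + i + l) * exp (- t) * indicator {0..} t))
      (\<Sum>i\<le>m. \<Sum>l\<le>m. (c * a i * a l) * fact (\<alpha> + i + l))"
    by (intro has_bochner_integral_sum has_bochner_integral_mult_right has_bochner_integral_power_exp_Ici)
  ultimately show ?thesis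
    by (simp add: density)
qed

section \<open>The normalized complex Hermite functions\<close>

definition hermite_fun :: "nat \<Rightarrow> nat \<Rightarrow> complex \<Rightarrow> complex" where
  "hermite_fun r j z = complex_of_real (exp (- pi / 2 * (cmod z)\<^sup>2)) * cHermite j r z"

lemma measurable_cnj [measurable (raw)]:
  "f \<in> borel_measurable M \<Longrightarrow> (\<lambda>x. cnj (f x)) \<in> borel_measurable M"
  by (simp add: borel_measurable_complex_iff)

lemma continuous_on_hermite_fun: "continuous_on UNIV (hermite_fun r j)"
  unfolding hermite_fun_def cHermite_def laguerre_def
  by (cases "r < j") (simp_all add: continuous_on_cnj continuous_intros)

lemma borel_measurable_hermite_fun [measurable]: "hermite_fun r j \<in> borel_measurable borel"
  by (rule borel_measurable_continuous_onI[OF continuous_on_hermite_fun])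

lemma power2_power: "(y ^ n)\<^sup>2 = (y\<^sup>2) ^ n" for y :: "'a :: comm_monoid_mult"
  by (metis power_mult mult.commute)

lemma powr_half_nat:
  fixes x :: real
  assumes "x > 0"
  shows "x powr (real n / 2) = sqrt x ^ n"
proof -
  have "sqrt x ^ n = (x powr (1 / 2)) ^ n" using assms by (simp add: powr_half_sqrt)
  also have "\<dots> = x powr (real n * (1 / 2))" by (rule powr_power) (use assms in simp)
  finally show ?thesis by simp
qed

lemma norm_cHermite_sq:
  "(cmod (cHermite j r z))\<^sup>2 = fact (min j r) / fact (max j r) * (pi * (cmod z)\<^sup>2) ^ (max j r - min j r)
      * (laguerre (min j r) (max j r - min j r) (pi * (cmod z)\<^sup>2))\<^sup>2"
proof -
  have pi_powr: "(pi powr (real n / 2))\<^sup>2 = pi ^ n" for n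
    by (simp only: power2_power powr_half_nat pi_gt_zero real_sqrt_pow2 less_imp_le)
  show ?thesis
    by (cases "j > r")
       (simp_all add: cHermite_def norm_mult norm_power pi_powr power_mult_distrib power2_power
         del: of_nat_diff)
qed

lemma norm_hermite_fun_sq:
  "(cmod (hermite_fun r j z))\<^sup>2 = laguerre_density (min j r) (max j r - min j r) (pi * (cmod z)\<^sup>2)"
proof -
  have "(exp (- pi / 2 * (cmod z)\<^sup>2))\<^sup>2 = exp (- (pi * (cmod z)\<^sup>2))"
    by (simp add: power2_eq_square exp_add[symmetric])
  moreover have "min j r + (max j r - min j r) = max j r" by simp
  ultimately show ?thesis
    by (simp add: hermite_fun_def norm_mult power_mult_distrib norm_cHermite_sq laguerre_density_def)
qed

lemma has_bochner_integral_norm_hermite_fun_sq: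
  "has_bochner_integral lborel (\<lambda>z. (cmod (hermite_fun r j z))\<^sup>2) 1"
proof -
  define m where "m = min j r"
  define \<alpha> where "\<alpha> = max j r - min j r"
  define f where "f s = laguerre_density m \<alpha> (pi * \<bar>s\<bar>)" for s
  have [measurable]: "f \<in> borel_measurable borel" unfolding f_def by measurable
  have f_nonneg: "f s \<ge> 0" for s unfolding f_def by (rule laguerre_density_nonneg) simp
  have "(\<integral>\<^sup>+z. ennreal ((cmod (hermite_fun r j z))\<^sup>2) \<partial>lborel) = (\<integral>\<^sup>+z. ennreal (f ((cmod z)\<^sup>2)) \<partial>lborel)"
    by (simp add: norm_hermite_fun_sq f_def m_def \<alpha>_def)
  also have "\<dots> = ennreal pi * (\<integral>\<^sup>+s. ennreal (f s) * indicator {0..} s \<partial>lborel)"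
    by (rule nn_integral_radial) (use f_nonneg in auto)
  also have "\<dots> = (\<integral>\<^sup>+t. ennreal (laguerre_density m \<alpha> t * indicator {0..} t) \<partial>lborel)"
  proof -
    have "ennreal (laguerre_density m \<alpha> (pi * s) * indicator {0..} (pi * s)) =
        ennreal (f s) * indicator {0..} s" for s
      by (cases "s \<ge> 0") (auto simp: f_def zero_le_mult_iff not_le split: split_indicator)
    then show ?thesis
      using nn_integral_real_affine[of "\<lambda>t. ennreal (laguerre_density m \<alpha> t * indicator {0..} t)" pi 0]
      by simp
  qed
  also have "\<dots> = ennreal 1"
    using has_bochner_integral_laguerre_density[of m \<alpha>]
    by (subst nn_integral_eq_integral)
       (auto simp: has_bochner_integral_iff laguerre_density_nonneg split: split_indicator)
  finally show ?thesis
    by (intro has_bochner_integral_nn_integral) auto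
qed

lemma hermite_fun_mult_unit:
  assumes u: "cmod u = 1"
  shows "hermite_fun r j (u * z) = u ^ j * cnj u ^ r * hermite_fun r j z"
proof -
  have uu: "u * cnj u = 1" using u complex_norm_square[of u] by simp
  have "u ^ j * cnj u ^ r = (if j > r then u ^ (j - r) else cnj u ^ (r - j))"
  proof (cases "j > r")
    case True
    then have "u ^ j = u ^ (j - r) * u ^ r" by (simp add: power_add[symmetric])
    then show ?thesis using True by (simp add: mult.assoc power_mult_distrib[symmetric] uu)
  next
    case False
    then have "cnj u ^ r = cnj u ^ (r - j) * cnj u ^ j" by (simp add: power_add[symmetric])
    then show ?thesis using False by (simp add: mult_ac power_mult_distrib[symmetric] uu)
  qed
  then show ?thesis
    using u by (simp add: hermite_fun_def cHermite_def norm_mult power_mult_distrib)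
qed

text \<open>Under a rotation \<open>z \<mapsto> u z\<close> the product \<open>\<phi>\<^sub>j conj \<phi>\<^sub>k\<close> picks up the factor \<open>u\<^sup>j\<^sup>-\<^sup>k\<close>;
  a unit \<open>u\<close> with \<open>u\<^sup>\<bar>\<^sup>j\<^sup>-\<^sup>k\<^sup>\<bar> = -1\<close> makes the integral equal to its own negative.\<close>
lemma hermite_fun_orthogonal_weighted:
  fixes w :: "complex \<Rightarrow> real"
  assumes [measurable]: "w \<in> borel_measurable borel"
    and rotation_invariant: "\<And>u z. cmod u = 1 \<Longrightarrow> w (u * z) = w z"
    and "j \<noteq> k"
  shows "(LINT z|lborel. w z * (hermite_fun r j z * cnj (hermite_fun r k z))) = 0"
proof -
  define d where "d = (if k < j then j - k else k - j)"
  define u where "u = cis (pi / real d)"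
  have d: "d \<ge> 1" using \<open>j \<noteq> k\<close> by (auto simp: d_def)
  have u: "cmod u = 1" by (simp add: u_def)
  have uu: "u * cnj u = 1" using u complex_norm_square[of u] by simp
  have "u ^ d = cis (real d * (pi / real d))" unfolding u_def by (rule Complex.DeMoivre)
  with d have ud: "u ^ d = -1" by simp
  have c: "u ^ j * cnj u ^ k = -1"
  proof (cases "k < j")
    case True
    then have "u ^ j = u ^ d * u ^ k" by (simp add: d_def power_add[symmetric])
    then show ?thesis by (simp add: mult.assoc power_mult_distrib[symmetric] uu ud)
  next
    case False
    with \<open>j \<noteq> k\<close> have "cnj u ^ k = cnj (u ^ d) * cnj u ^ j" by (simp add: d_def power_add[symmetric])
    then show ?thesis by (simp add: mult_ac power_mult_distrib[symmetric] uu ud)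
  qed
  have ur: "u ^ r * cnj u ^ r = 1" using uu by (simp add: power_mult_distrib[symmetric])
  show ?thesis
  proof (rule integral_eq_0_if_rotation_covariant[OF _ u])
    fix z
    show "w (u * z) * (hermite_fun r j (u * z) * cnj (hermite_fun r k (u * z))) =
        - 1 * (w z * (hermite_fun r j z * cnj (hermite_fun r k z)))"
      by (simp add: rotation_invariant[OF u] hermite_fun_mult_unit[OF u] power_mult_distrib
          c[symmetric] ur mult_ac)
  qed auto
qed

lemma summable_power_div_sqrt_fact:
  fixes a :: real
  assumes "a \<ge> 0"
  shows "summable (\<lambda>j. a ^ j / sqrt (fact j))"
proof (rule summable_comparison_test')
  show "summable (\<lambda>j. (inverse (fact j) * (2 * a\<^sup>2) ^ j + (1 / 2) ^ j) / 2)"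
    by (intro summable_divide summable_add summable_exp summable_geometric) simp
  fix j :: nat
  \<comment> \<open>AM--GM: \<open>\<surd>(xy) \<le> (x + y) / 2\<close> for \<open>x = (2a\<^sup>2)\<^sup>j / j!\<close> and \<open>y = 2\<^sup>-\<^sup>j\<close>\<close>
  have eq: "(2 * a\<^sup>2) ^ j * (1 / 2) ^ j = (a ^ j)\<^sup>2"
    unfolding power2_power by (simp only: power_mult_distrib[symmetric]) simp
  have "inverse (fact j) * (2 * a\<^sup>2) ^ j * (1 / 2) ^ j = (a ^ j)\<^sup>2 / fact j"
    unfolding mult.assoc eq by (simp add: divide_inverse)
  then have "a ^ j / sqrt (fact j) = sqrt (inverse (fact j) * (2 * a\<^sup>2) ^ j * (1 / 2) ^ j)"
    using assms by (simp add: real_sqrt_divide)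
  also have "\<dots> \<le> (inverse (fact j) * (2 * a\<^sup>2) ^ j + (1 / 2) ^ j) / 2"
    by (rule arith_geo_mean_sqrt) auto
  finally show "norm (a ^ j / sqrt (fact j)) \<le> (inverse (fact j) * (2 * a\<^sup>2) ^ j + (1 / 2) ^ j) / 2"
    using assms by simp
qed

lemma abs_laguerre_le: "\<bar>laguerre m \<alpha> x\<bar> \<le> (m + 1) * 2 ^ (m + \<alpha>) * (1 + \<bar>x\<bar>) ^ m"
proof -
  have "\<bar>laguerre m \<alpha> x\<bar> \<le> (\<Sum>i\<le>m. \<bar>(-1) ^ i * real ((m + \<alpha>) choose (m - i)) * x ^ i / fact i\<bar>)"
    unfolding laguerre_def by (rule sum_abs)
  also have "\<dots> = (\<Sum>i\<le>m. real ((m + \<alpha>) choose (m - i)) * (\<bar>x\<bar> ^ i / fact i))"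
    by (simp add: abs_mult power_abs)
  also have "\<dots> \<le> (\<Sum>i\<le>m. 2 ^ (m + \<alpha>) * (1 + \<bar>x\<bar>) ^ m)"
  proof (rule sum_mono)
    fix i assume i: "i \<in> {..m}"
    have "real ((m + \<alpha>) choose (m - i)) \<le> 2 ^ (m + \<alpha>)"
      using binomial_le_pow2[of "m + \<alpha>" "m - i"] by (metis of_nat_le_iff of_nat_numeral of_nat_power)
    moreover have "\<bar>x\<bar> ^ i / fact i \<le> (1 + \<bar>x\<bar>) ^ m"
    proof -
      have "\<bar>x\<bar> ^ i / fact i \<le> \<bar>x\<bar> ^ i / 1" by (rule divide_left_mono) (auto simp: fact_ge_1)
      then have "\<bar>x\<bar> ^ i / fact i \<le> \<bar>x\<bar> ^ i" by simp
      also have "\<dots> \<le> (1 + \<bar>x\<bar>) ^ i" by (intro power_mono) auto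
      also have "\<dots> \<le> (1 + \<bar>x\<bar>) ^ m" using i by (intro power_increasing) auto
      finally show ?thesis .
    qed
    ultimately show "real ((m + \<alpha>) choose (m - i)) * (\<bar>x\<bar> ^ i / fact i) \<le> 2 ^ (m + \<alpha>) * (1 + \<bar>x\<bar>) ^ m"
      by (intro mult_mono) auto
  qed
  finally show ?thesis by (simp add: algebra_simps)
qed

lemma norm_cHermite_le:
  assumes "j > r"
  shows "cmod (cHermite j r z) \<le> (sqrt (fact r) * (real r + 1) * (1 + pi * (cmod z)\<^sup>2) ^ r) *
            ((2 * (1 + sqrt pi * cmod z)) ^ j / sqrt (fact j))"
proof -
  define x where "x = pi * (cmod z)\<^sup>2"
  define s where "s = sqrt pi * cmod z"
  have "x \<ge> 0" "s \<ge> 0" by (simp_all add: x_def s_def)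
  have "cmod (cHermite j r z) = sqrt (fact r / fact j) * (pi powr (real (j - r) / 2) * (cmod z) ^ (j - r))
      * \<bar>laguerre r (j - r) x\<bar>"
    using assms by (simp add: cHermite_def norm_mult norm_power abs_mult x_def)
  also have "\<dots> = sqrt (fact r) / sqrt (fact j) * s ^ (j - r) * \<bar>laguerre r (j - r) x\<bar>"
    by (simp add: powr_half_nat s_def power_mult_distrib real_sqrt_divide)
  also have "\<dots> \<le> sqrt (fact r) / sqrt (fact j) * (1 + s) ^ j * ((real r + 1) * 2 ^ j * (1 + x) ^ r)"
  proof (intro mult_mono)
    have "s ^ (j - r) \<le> (1 + s) ^ (j - r)" using \<open>s \<ge> 0\<close> by (intro power_mono) auto
    also have "\<dots> \<le> (1 + s) ^ j" using \<open>s \<ge> 0\<close> by (intro power_increasing) auto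
    finally show "s ^ (j - r) \<le> (1 + s) ^ j" .
    show "\<bar>laguerre r (j - r) x\<bar> \<le> (real r + 1) * 2 ^ j * (1 + x) ^ r"
      using abs_laguerre_le[of r "j - r" x] assms \<open>x \<ge> 0\<close> by simp
  qed (use \<open>s \<ge> 0\<close> in auto)
  also have "\<dots> = (sqrt (fact r) * (real r + 1) * (1 + x) ^ r) * ((2 * (1 + s)) ^ j / sqrt (fact j))"
    unfolding power_mult_distrib[of 2] by (simp add: divide_inverse mult_ac)
  finally show ?thesis by (simp add: x_def s_def)
qed

lemma summable_norm_hermite_fun: "summable (\<lambda>j. cmod (hermite_fun r j z))"
proof (rule summable_comparison_test'[where N = "Suc r"])
  show "summable (\<lambda>j. (sqrt (fact r) * (real r + 1) * (1 + pi * (cmod z)\<^sup>2) ^ r) *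
            ((2 * (1 + sqrt pi * cmod z)) ^ j / sqrt (fact j)))"
    by (intro summable_mult summable_power_div_sqrt_fact) simp
  fix j assume "Suc r \<le> j"
  have "cmod (hermite_fun r j z) \<le> cmod (cHermite j r z)"
    by (simp add: hermite_fun_def norm_mult mult_left_le_one_le)
  with \<open>Suc r \<le> j\<close> norm_cHermite_le[of r j z]
  show "norm (cmod (hermite_fun r j z)) \<le> (sqrt (fact r) * (real r + 1) * (1 + pi * (cmod z)\<^sup>2) ^ r) *
            ((2 * (1 + sqrt pi * cmod z)) ^ j / sqrt (fact j))"
    by simp
qed

section \<open>Square-integrable functions\<close>

lemma L2I: "f \<in> borel_measurable lborel \<Longrightarrow> integrable lborel (\<lambda>z. (cmod (f z))\<^sup>2) \<Longrightarrow> f \<in> L2"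
  by (simp add: L2_def)

lemma L2_measurable: "f \<in> L2 \<Longrightarrow> f \<in> borel_measurable borel"
  by (simp add: L2_def)

lemma L2_integrable_norm_sq: "f \<in> L2 \<Longrightarrow> integrable lborel (\<lambda>z. (cmod (f z))\<^sup>2)"
  by (simp add: L2_def)

lemma mult_le_sum_squares: "a * b \<le> a\<^sup>2 + b\<^sup>2" for a b :: real
proof -
  have "0 \<le> (a - b)\<^sup>2" "0 \<le> a\<^sup>2" "0 \<le> b\<^sup>2" by simp_all
  then show ?thesis unfolding power2_diff by linarith
qed

lemma integrable_L2_mult_cnj:
  assumes "f \<in> L2" "g \<in> L2"
  shows "integrable lborel (\<lambda>z. f z * cnj (g z))"
proof (rule Bochner_Integration.integrable_bound)
  show "integrable lborel (\<lambda>z. (cmod (f z))\<^sup>2 + (cmod (g z))\<^sup>2)"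
    using assms by (simp add: L2_integrable_norm_sq)
  show "AE z in lborel. norm (f z * cnj (g z)) \<le> norm ((cmod (f z))\<^sup>2 + (cmod (g z))\<^sup>2)"
    by (simp add: norm_mult mult_le_sum_squares)
qed (use L2_measurable[OF assms(1)] L2_measurable[OF assms(2)] in measurable)

lemma L2_add:
  assumes f: "f \<in> L2" and g: "g \<in> L2"
  shows "(\<lambda>z. f z + g z) \<in> L2"
proof (rule L2I)
  note [measurable] = L2_measurable[OF f] L2_measurable[OF g]
  show "(\<lambda>z. f z + g z) \<in> borel_measurable lborel" by measurable
  show "integrable lborel (\<lambda>z. (cmod (f z + g z))\<^sup>2)"
  proof (rule Bochner_Integration.integrable_bound)
    show "integrable lborel (\<lambda>z. 2 * (cmod (f z))\<^sup>2 + 2 * (cmod (g z))\<^sup>2)"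
      using L2_integrable_norm_sq[OF f] L2_integrable_norm_sq[OF g] by simp
    have "(cmod (f z + g z))\<^sup>2 \<le> 2 * (cmod (f z))\<^sup>2 + 2 * (cmod (g z))\<^sup>2" for z
    proof -
      have "(cmod (f z + g z))\<^sup>2 \<le> (cmod (f z) + cmod (g z))\<^sup>2"
        by (intro power_mono norm_triangle_ineq) auto
      also have "\<dots> \<le> 2 * (cmod (f z))\<^sup>2 + 2 * (cmod (g z))\<^sup>2"
        using sum_squares_bound[of "cmod (f z)" "cmod (g z)"] by (simp add: power2_sum)
      finally show ?thesis .
    qed
    then show "AE z in lborel. norm ((cmod (f z + g z))\<^sup>2) \<le> norm (2 * (cmod (f z))\<^sup>2 + 2 * (cmod (g z))\<^sup>2)"
      by simp
  qed measurable
qed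

lemma L2_cmult:
  assumes "f \<in> L2"
  shows "(\<lambda>z. c * f z) \<in> L2"
proof (rule L2I)
  show "(\<lambda>z. c * f z) \<in> borel_measurable lborel" using L2_measurable[OF assms] by measurable
  show "integrable lborel (\<lambda>z. (cmod (c * f z))\<^sup>2)"
    using L2_integrable_norm_sq[OF assms] by (simp add: norm_mult power_mult_distrib)
qed

lemma L2_diff: "f \<in> L2 \<Longrightarrow> g \<in> L2 \<Longrightarrow> (\<lambda>z. f z - g z) \<in> L2"
  using L2_add[of f "\<lambda>z. -1 * g z"] L2_cmult[of g "-1"] by simp

lemma L2_sum: "(\<And>j. j \<in> S \<Longrightarrow> f j \<in> L2) \<Longrightarrow> (\<lambda>z. \<Sum>j\<in>S. f j z) \<in> L2"
proof (induction S rule: infinite_finite_induct)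
  case (infinite S)
  then show ?case by (simp add: L2I)
next
  case empty
  then show ?case by (simp add: L2I)
next
  case (insert x S)
  then show ?case by (simp add: L2_add)
qed

lemma L2_norm_sq: "(L2_norm f)\<^sup>2 = (LINT z|lborel. (cmod (f z))\<^sup>2)"
  by (simp add: L2_norm_def)

lemma L2_norm_diff_sq_le:
  assumes "f \<in> L2" "g \<in> L2" "h \<in> L2"
  shows "(L2_norm (\<lambda>z. f z - h z))\<^sup>2 \<le> 2 * (L2_norm (\<lambda>z. f z - g z))\<^sup>2 + 2 * (L2_norm (\<lambda>z. g z - h z))\<^sup>2"
proof -
  have "(cmod (f z - h z))\<^sup>2 \<le> 2 * (cmod (f z - g z))\<^sup>2 + 2 * (cmod (g z - h z))\<^sup>2" for z
  proof -
    have "(cmod (f z - h z))\<^sup>2 \<le> (cmod (f z - g z) + cmod (g z - h z))\<^sup>2"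
      using norm_triangle_ineq[of "f z - g z" "g z - h z"] by (intro power_mono) auto
    also have "\<dots> \<le> 2 * (cmod (f z - g z))\<^sup>2 + 2 * (cmod (g z - h z))\<^sup>2"
      using sum_squares_bound[of "cmod (f z - g z)" "cmod (g z - h z)"] by (simp add: power2_sum)
    finally show ?thesis .
  qed
  moreover have "integrable lborel (\<lambda>z. (cmod (f z - h z))\<^sup>2)"
    "integrable lborel (\<lambda>z. (cmod (f z - g z))\<^sup>2)" "integrable lborel (\<lambda>z. (cmod (g z - h z))\<^sup>2)"
    using assms by (simp_all add: L2_integrable_norm_sq L2_diff)
  ultimately have "(LINT z|lborel. (cmod (f z - h z))\<^sup>2) \<le>
      (LINT z|lborel. 2 * (cmod (f z - g z))\<^sup>2 + 2 * (cmod (g z - h z))\<^sup>2)"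
    by (intro integral_mono) auto
  also have "\<dots> = 2 * (LINT z|lborel. (cmod (f z - g z))\<^sup>2) + 2 * (LINT z|lborel. (cmod (g z - h z))\<^sup>2)"
    using calculation \<open>integrable lborel (\<lambda>z. (cmod (f z - g z))\<^sup>2)\<close>
      \<open>integrable lborel (\<lambda>z. (cmod (g z - h z))\<^sup>2)\<close> by simp
  finally show ?thesis unfolding L2_norm_sq .
qed

lemma L2_inner_self: "L2_inner f f = complex_of_real (LINT z|lborel. (cmod (f z))\<^sup>2)"
  unfolding L2_inner_def
  by (subst integral_complex_of_real[symmetric]) (simp only: complex_norm_square)

lemma L2_inner_commute: "L2_inner g f = cnj (L2_inner f g)"
proof -
  have "(\<lambda>z. g z * cnj (f z)) = (\<lambda>z. cnj (f z * cnj (g z)))" by (simp add: fun_eq_iff mult.commute)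
  then show ?thesis unfolding L2_inner_def by (simp only: Bochner_Integration.integral_cnj)
qed

lemma L2_inner_sum_left:
  assumes "\<And>j. j \<in> S \<Longrightarrow> f j \<in> L2" and "h \<in> L2"
  shows "L2_inner (\<lambda>z. \<Sum>j\<in>S. c j * f j z) h = (\<Sum>j\<in>S. c j * L2_inner (f j) h)"
proof -
  have "L2_inner (\<lambda>z. \<Sum>j\<in>S. c j * f j z) h = (LINT z|lborel. (\<Sum>j\<in>S. c j * (f j z * cnj (h z))))"
    unfolding L2_inner_def by (simp add: sum_distrib_right mult.assoc)
  also have "\<dots> = (\<Sum>j\<in>S. LINT z|lborel. c j * (f j z * cnj (h z)))"
    by (rule Bochner_Integration.integral_sum) (use assms integrable_L2_mult_cnj in auto)
  also have "\<dots> = (\<Sum>j\<in>S. c j * L2_inner (f j) h)"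
    unfolding L2_inner_def by simp
  finally show ?thesis .
qed

lemma L2_inner_sum_right:
  assumes "\<And>j. j \<in> S \<Longrightarrow> f j \<in> L2" and "h \<in> L2"
  shows "L2_inner h (\<lambda>z. \<Sum>j\<in>S. c j * f j z) = (\<Sum>j\<in>S. cnj (c j) * L2_inner h (f j))"
  using L2_inner_sum_left[OF assms, where c = c] by (subst (1 2) L2_inner_commute) simp

lemma L2_inner_diff_left:
  "f \<in> L2 \<Longrightarrow> g \<in> L2 \<Longrightarrow> h \<in> L2 \<Longrightarrow> L2_inner (\<lambda>z. f z - g z) h = L2_inner f h - L2_inner g h"
  unfolding L2_inner_def by (simp add: integrable_L2_mult_cnj left_diff_distrib)

lemma L2_inner_diff_right:
  "f \<in> L2 \<Longrightarrow> g \<in> L2 \<Longrightarrow> h \<in> L2 \<Longrightarrow> L2_inner h (\<lambda>z. f z - g z) = L2_inner h f - L2_inner h g"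
  using L2_inner_diff_left[of f g h] L2_inner_commute by (metis complex_cnj_diff)

section \<open>Orthonormal sequences in \<open>L\<^sup>2\<close>\<close>

locale L2_orthonormal =
  fixes e :: "nat \<Rightarrow> complex \<Rightarrow> complex"
  assumes mem_L2 [simp]: "e j \<in> L2"
    and inner: "L2_inner (e j) (e k) = (if j = k then 1 else 0)"
begin

lemma inj: "inj e"
proof (rule injI)
  fix j k assume "e j = e k"
  then have "L2_inner (e j) (e k) = L2_inner (e k) (e k)" by simp
  then show "j = k" by (simp add: inner split: if_splits)
qed

lemma integral_norm_sq: "(LINT z|lborel. (cmod (e j z))\<^sup>2) = 1"
  using L2_inner_self[of "e j"] inner[of j j] by simp

lemma not_AE_zero: "\<not> (AE z in lborel. e j z = 0)"
proof
  assume "AE z in lborel. e j z = 0"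
  then have "AE z in lborel. (cmod (e j z))\<^sup>2 = 0" by eventually_elim simp
  then have "(LINT z|lborel. (cmod (e j z))\<^sup>2) = 0" by (rule integral_eq_zero_AE)
  then show False by (simp add: integral_norm_sq)
qed

lemma L2_sum_cmult: "(\<lambda>z. \<Sum>j\<in>S. c j * e j z) \<in> L2"
  by (intro L2_sum L2_cmult mem_L2)

lemma inner_sum_cmult_self:
  assumes "finite S"
  shows "L2_inner (\<lambda>z. \<Sum>j\<in>S. c j * e j z) (\<lambda>z. \<Sum>j\<in>S. c j * e j z) = (\<Sum>j\<in>S. c j * cnj (c j))"
proof -
  have "L2_inner (\<lambda>z. \<Sum>j\<in>S. c j * e j z) (\<lambda>z. \<Sum>j\<in>S. c j * e j z)
     = (\<Sum>j\<in>S. c j * (\<Sum>k\<in>S. cnj (c k) * L2_inner (e j) (e k)))"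
    by (simp add: L2_inner_sum_left L2_inner_sum_right L2_sum_cmult)
  also have "\<dots> = (\<Sum>j\<in>S. c j * cnj (c j))"
    using assms by (simp add: inner if_distrib sum.delta cong: if_cong)
  finally show ?thesis .
qed

lemma integral_norm_sum_cmult_sq:
  assumes "finite S"
  shows "(LINT z|lborel. (cmod (\<Sum>j\<in>S. c j * e j z))\<^sup>2) = (\<Sum>j\<in>S. (cmod (c j))\<^sup>2)"
proof -
  have "complex_of_real (LINT z|lborel. (cmod (\<Sum>j\<in>S. c j * e j z))\<^sup>2) = (\<Sum>j\<in>S. c j * cnj (c j))"
    using L2_inner_self[of "\<lambda>z. \<Sum>j\<in>S. c j * e j z"] inner_sum_cmult_self[OF assms, of c] by simp
  also have "\<dots> = complex_of_real (\<Sum>j\<in>S. (cmod (c j))\<^sup>2)"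
    unfolding of_real_sum by (simp only: complex_norm_square)
  finally show ?thesis by (simp only: of_real_eq_iff)
qed

text \<open>The proof computes \<open>\<parallel>G - P\<parallel>\<^sup>2 = \<parallel>G\<parallel>\<^sup>2 - \<Sum>\<^sub>j |\<langle>G, e\<^sub>j\<rangle>|\<^sup>2\<close> for the orthogonal projection \<open>P\<close>
  of \<open>G\<close> onto the span of the \<open>e\<^sub>j\<close>, \<open>j \<in> S\<close>.\<close>
lemma bessel_inequality:
  assumes G: "G \<in> L2" and "finite S"
  shows "(\<Sum>j\<in>S. (cmod (L2_inner G (e j)))\<^sup>2) \<le> (LINT z|lborel. (cmod (G z))\<^sup>2)"
proof -
  define a where "a j = L2_inner G (e j)" for j
  define P where "P z = (\<Sum>j\<in>S. a j * e j z)" for z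
  define s where "s = (\<Sum>j\<in>S. a j * cnj (a j))"
  have P: "P \<in> L2" unfolding P_def[abs_def] by (rule L2_sum_cmult)
  have "L2_inner G P = (\<Sum>j\<in>S. cnj (a j) * L2_inner G (e j))"
    unfolding P_def[abs_def] using G by (rule L2_inner_sum_right[rotated]) simp
  then have GP: "L2_inner G P = s"
    by (simp add: s_def a_def mult.commute)
  have PG: "L2_inner P G = s"
    using GP by (subst L2_inner_commute) (simp add: s_def mult.commute)
  have PP: "L2_inner P P = s"
    unfolding P_def[abs_def] s_def by (rule inner_sum_cmult_self[OF \<open>finite S\<close>])
  have "L2_inner (\<lambda>z. G z - P z) (\<lambda>z. G z - P z) = L2_inner G G - s"
    using G P by (simp add: L2_inner_diff_left L2_inner_diff_right L2_diff GP PG PP)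
  then have "complex_of_real (LINT z|lborel. (cmod (G z - P z))\<^sup>2) =
      complex_of_real ((LINT z|lborel. (cmod (G z))\<^sup>2) - (\<Sum>j\<in>S. (cmod (a j))\<^sup>2))"
    unfolding L2_inner_self s_def of_real_diff of_real_sum by (simp only: complex_norm_square)
  then have "(LINT z|lborel. (cmod (G z - P z))\<^sup>2) = (LINT z|lborel. (cmod (G z))\<^sup>2) - (\<Sum>j\<in>S. (cmod (a j))\<^sup>2)"
    by (simp only: of_real_eq_iff)
  moreover have "(LINT z|lborel. (cmod (G z - P z))\<^sup>2) \<ge> 0" by simp
  ultimately show ?thesis unfolding a_def by linarith
qed

lemma summable_inner_sq: "G \<in> L2 \<Longrightarrow> summable (\<lambda>j. (cmod (L2_inner G (e j)))\<^sup>2)"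
  by (rule summableI_nonneg_bounded[where x = "LINT z|lborel. (cmod (G z))\<^sup>2"])
     (auto intro: bessel_inequality)

text \<open>Fatou's lemma passes the orthonormal estimate from finite blocks of the series to its tail.\<close>
lemma nn_integral_series_tail_le:
  assumes sums: "\<And>z. (\<lambda>j. c j * e j z) sums F z"
    and summable: "summable (\<lambda>j. (cmod (c j))\<^sup>2)"
  shows "(\<integral>\<^sup>+z. ennreal ((cmod (F z - (\<Sum>j<n. c j * e j z)))\<^sup>2) \<partial>lborel)
      \<le> ennreal (\<Sum>k. (cmod (c (k + n)))\<^sup>2)"
proof -
  define S where "S m z = (\<Sum>j<m. c j * e j z)" for m z
  define u where "u m z = ennreal ((cmod (S m z - S n z))\<^sup>2)" for m z
  have [measurable]: "S m \<in> borel_measurable lborel" for m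
    using L2_sum_cmult[of c "{..<m}"] unfolding S_def[abs_def] by (simp add: L2_measurable)
  have [measurable]: "u m \<in> borel_measurable lborel" for m unfolding u_def by measurable
  have liminf_u: "liminf (\<lambda>m. u m z) = ennreal ((cmod (F z - S n z))\<^sup>2)" for z
    using sums[of z] unfolding sums_def S_def u_def
    by (intro lim_imp_Liminf tendsto_ennrealI tendsto_intros) auto
  have block: "integral\<^sup>N lborel (u m) \<le> ennreal (\<Sum>k. (cmod (c (k + n)))\<^sup>2)" if "n \<le> m" for m
  proof -
    have "S m z - S n z = (\<Sum>j\<in>{n..<m}. c j * e j z)" for z
      unfolding S_def using sum_diff_nat_ivl[OF _ that, of 0 "\<lambda>j. c j * e j z"]
      by (simp add: atLeast0LessThan)
    then have "integral\<^sup>N lborel (u m) = ennreal (LINT z|lborel. (cmod (\<Sum>j\<in>{n..<m}. c j * e j z))\<^sup>2)"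
      unfolding u_def using L2_integrable_norm_sq[OF L2_sum_cmult[of c "{n..<m}"]]
      by (subst nn_integral_eq_integral[symmetric]) auto
    also have "\<dots> = ennreal (\<Sum>k<m - n. (cmod (c (k + n)))\<^sup>2)"
      using sum.shift_bounds_nat_ivl[of "\<lambda>j. (cmod (c j))\<^sup>2" 0 n "m - n"] that
      by (simp add: integral_norm_sum_cmult_sq atLeast0LessThan add.commute)
    also have "\<dots> \<le> ennreal (\<Sum>k. (cmod (c (k + n)))\<^sup>2)"
      using summable summable_iff_shift[of "\<lambda>j. (cmod (c j))\<^sup>2" n]
      by (intro ennreal_leI sum_le_suminf) auto
    finally show ?thesis .
  qed
  have "(\<integral>\<^sup>+z. ennreal ((cmod (F z - S n z))\<^sup>2) \<partial>lborel) = (\<integral>\<^sup>+z. liminf (\<lambda>m. u m z) \<partial>lborel)"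
    by (simp add: liminf_u)
  also have "\<dots> \<le> liminf (\<lambda>m. integral\<^sup>N lborel (u m))"
    by (rule nn_integral_liminf) measurable
  also have "\<dots> \<le> ennreal (\<Sum>k. (cmod (c (k + n)))\<^sup>2)"
    by (rule Liminf_le) (use block in \<open>auto simp: eventually_sequentially\<close>)
  finally show ?thesis unfolding S_def .
qed

lemma series_L2:
  assumes sums: "\<And>z. (\<lambda>j. c j * e j z) sums F z"
    and summable: "summable (\<lambda>j. (cmod (c j))\<^sup>2)"
  shows "F \<in> L2"
    and "(L2_norm (\<lambda>z. F z - (\<Sum>j<n. c j * e j z)))\<^sup>2 \<le> (\<Sum>k. (cmod (c (k + n)))\<^sup>2)"
proof -
  define S where "S z = (\<Sum>j<n. c j * e j z)" for z
  define tail where "tail = (\<Sum>k. (cmod (c (k + n)))\<^sup>2)"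
  have S: "S \<in> L2" unfolding S_def[abs_def] by (rule L2_sum_cmult)
  note [measurable] = L2_measurable[OF S]
  have "(\<lambda>m. \<Sum>j<m. c j * e j z) \<longlonglongrightarrow> F z" for z
    using sums[of z] by (simp add: sums_def)
  then have [measurable]: "F \<in> borel_measurable lborel"
    by (rule borel_measurable_LIMSEQ_metric[rotated]) (use L2_measurable[OF L2_sum_cmult] in simp)
  have nn: "(\<integral>\<^sup>+z. ennreal ((cmod (F z - S z))\<^sup>2) \<partial>lborel) \<le> ennreal tail"
    unfolding S_def tail_def by (rule nn_integral_series_tail_le[OF sums summable])
  have int: "integrable lborel (\<lambda>z. (cmod (F z - S z))\<^sup>2)"
  proof (rule integrableI_bounded)
    show "(\<lambda>z. (cmod (F z - S z))\<^sup>2) \<in> borel_measurable lborel" by measurable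
    show "(\<integral>\<^sup>+z. ennreal (norm ((cmod (F z - S z))\<^sup>2)) \<partial>lborel) < \<infinity>"
      using nn ennreal_less_top[of tail] by (simp add: le_less_trans)
  qed
  have diff: "(\<lambda>z. F z - S z) \<in> L2"
    using int by (intro L2I) measurable
  show "F \<in> L2"
    using L2_add[OF diff S] by simp
  have "tail \<ge> 0"
    unfolding tail_def using summable summable_iff_shift[of "\<lambda>j. (cmod (c j))\<^sup>2" n]
    by (intro suminf_nonneg) auto
  moreover have "ennreal (LINT z|lborel. (cmod (F z - S z))\<^sup>2) \<le> ennreal tail"
    using nn by (subst nn_integral_eq_integral[OF int, symmetric]) auto
  ultimately show "(L2_norm (\<lambda>z. F z - (\<Sum>j<n. c j * e j z)))\<^sup>2 \<le> tail"
    unfolding L2_norm_sq S_def[symmetric] by (simp add: ennreal_le_iff)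
qed

lemma series_L2_approx:
  assumes sums: "\<And>z. (\<lambda>j. c j * e j z) sums F z"
    and summable: "summable (\<lambda>j. (cmod (c j))\<^sup>2)" and "\<epsilon> > 0"
  obtains n where "L2_norm (\<lambda>z. F z - (\<Sum>j<n. c j * e j z)) < \<epsilon>"
proof -
  obtain n where n: "norm (\<Sum>k. (cmod (c (k + n)))\<^sup>2) < \<epsilon>\<^sup>2"
    using suminf_exist_split[OF _ summable, of "\<epsilon>\<^sup>2"] \<open>\<epsilon> > 0\<close> by auto
  have "(L2_norm (\<lambda>z. F z - (\<Sum>j<n. c j * e j z)))\<^sup>2 < \<epsilon>\<^sup>2"
    using series_L2(2)[OF sums summable, of n] n by simp
  then have "L2_norm (\<lambda>z. F z - (\<Sum>j<n. c j * e j z)) < \<epsilon>"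
    using \<open>\<epsilon> > 0\<close> by (simp add: power_less_imp_less_base)
  then show ?thesis by (rule that)
qed

end

section \<open>Kernels given by orthonormal expansions\<close>

locale L2_orthonormal_summable = L2_orthonormal +
  assumes summable_norm: "summable (\<lambda>j. cmod (e j z))"
begin

definition expansion_kernel :: "nat set \<Rightarrow> complex \<Rightarrow> complex \<Rightarrow> complex" where
  "expansion_kernel J z w = (\<Sum>j. if j \<in> J then e j z * cnj (e j w) else 0)"

definition expansion_coeff :: "nat set \<Rightarrow> (complex \<Rightarrow> complex) \<Rightarrow> nat \<Rightarrow> complex" where
  "expansion_coeff J G j = (if j \<in> J then L2_inner G (e j) else 0)"

lemma summable_norm_mult: "summable (\<lambda>j. cmod (e j z) * cmod (e j w))"
proof -
  have "(\<lambda>j. cmod (e j w)) \<longlonglongrightarrow> 0" by (rule summable_LIMSEQ_zero[OF summable_norm])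
  then have "eventually (\<lambda>j. cmod (e j w) < 1) sequentially"
    by (rule order_tendstoD(2)) simp
  then obtain N where N: "\<And>j. j \<ge> N \<Longrightarrow> cmod (e j w) < 1"
    by (auto simp: eventually_sequentially)
  show ?thesis
  proof (rule summable_comparison_test'[OF summable_norm[of z], where N = N])
    fix j assume "j \<ge> N"
    then show "norm (cmod (e j z) * cmod (e j w)) \<le> cmod (e j z)"
      using N[of j] by (simp add: mult_left_le)
  qed
qed

lemma integral_norm_kernel_term_le:
  assumes "G \<in> L2"
  shows "(LINT w|lborel. cmod (e j z * (G w * cnj (e j w)))) \<le>
      ((LINT w|lborel. (cmod (G w))\<^sup>2) + 1) * cmod (e j z)"
proof -
  have "integrable lborel (\<lambda>w. cmod (G w) * cmod (e j w))"
    using integrable_norm[OF integrable_L2_mult_cnj[OF assms mem_L2]] by (simp add: norm_mult)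
  then have "(LINT w|lborel. cmod (G w) * cmod (e j w)) \<le> (LINT w|lborel. (cmod (G w))\<^sup>2 + (cmod (e j w))\<^sup>2)"
    using assms by (intro integral_mono Bochner_Integration.integrable_add L2_integrable_norm_sq mem_L2
        mult_le_sum_squares)
  also have "\<dots> = (LINT w|lborel. (cmod (G w))\<^sup>2) + 1"
    using assms by (simp add: L2_integrable_norm_sq integral_norm_sq)
  finally have "cmod (e j z) * (LINT w|lborel. cmod (G w) * cmod (e j w)) \<le>
      cmod (e j z) * ((LINT w|lborel. (cmod (G w))\<^sup>2) + 1)"
    by (rule mult_left_mono) simp
  then show ?thesis
    by (simp add: norm_mult mult.commute)
qed

text \<open>Termwise integration of the kernel series is justified by \<open>\<Sum>\<^sub>j |e\<^sub>j(z)| \<integral> |G| |e\<^sub>j| < \<infinity>\<close>.\<close>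
lemma intop_expansion_kernel_sums:
  assumes G: "G \<in> L2"
  shows "(\<lambda>j. expansion_coeff J G j * e j z) sums intop (expansion_kernel J) G z"
proof -
  define k where "k j w = (if j \<in> J then e j z * cnj (e j w) else 0)" for j w
  define f where "f j w = k j w * G w" for j w
  note [measurable] = L2_measurable[OF G]
  have summable_k: "summable (\<lambda>j. cmod (k j w))" for w
    by (rule summable_comparison_test'[OF summable_norm_mult[of z w], where N = 0])
       (auto simp: k_def norm_mult)
  have f_eq: "f j = (\<lambda>w. if j \<in> J then e j z * (G w * cnj (e j w)) else 0)" for j
    by (auto simp: fun_eq_iff f_def k_def mult_ac)
  have integrable: "integrable lborel (f j)" for j
    using integrable_mult_right[OF integrable_L2_mult_cnj[OF G mem_L2], of "e j z" j]
    by (cases "j \<in> J") (simp_all add: f_eq)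
  have integral: "integral\<^sup>L lborel (f j) = expansion_coeff J G j * e j z" for j
    unfolding f_eq by (simp add: expansion_coeff_def L2_inner_def mult.commute)
  have "AE w in lborel. summable (\<lambda>j. norm (f j w))"
    unfolding f_def norm_mult by (intro AE_I2 summable_mult2 summable_k)
  moreover have "summable (\<lambda>j. LINT w|lborel. norm (f j w))"
  proof (rule summable_comparison_test'[OF summable_mult[OF summable_norm], where N = 0])
    fix j :: nat
    have "(LINT w|lborel. (cmod (G w))\<^sup>2) + 1 \<ge> 0" by (simp add: add_nonneg_nonneg)
    then show "norm (LINT w|lborel. norm (f j w)) \<le> ((LINT w|lborel. (cmod (G w))\<^sup>2) + 1) * cmod (e j z)"
      using integral_norm_kernel_term_le[OF G, of j z] by (cases "j \<in> J") (simp_all add: f_eq)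
  qed
  ultimately have "(\<lambda>j. integral\<^sup>L lborel (f j)) sums (LINT w|lborel. (\<Sum>j. f j w))"
    by (rule sums_integral[OF integrable])
  moreover have "(\<Sum>j. f j w) = expansion_kernel J z w * G w" for w
    unfolding f_def expansion_kernel_def k_def[symmetric]
    by (rule suminf_mult2[symmetric, OF summable_norm_cancel[OF summable_k]])
  ultimately show ?thesis
    by (simp add: integral intop_def)
qed

lemma summable_expansion_coeff_sq: "G \<in> L2 \<Longrightarrow> summable (\<lambda>j. (cmod (expansion_coeff J G j))\<^sup>2)"
  by (rule summable_comparison_test'[OF summable_inner_sq, where N = 0])
     (auto simp: expansion_coeff_def)

lemma intop_expansion_kernel_basis:
  assumes "k \<in> J"
  shows "intop (expansion_kernel J) (e k) = e k"
proof
  fix z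
  have "(\<lambda>j. expansion_coeff J (e k) j * e j z) = (\<lambda>j. if j = k then e j z else 0)"
    using assms by (auto simp: fun_eq_iff expansion_coeff_def inner)
  then have "(\<lambda>j. if j = k then e j z else 0) sums intop (expansion_kernel J) (e k) z"
    using intop_expansion_kernel_sums[OF mem_L2[of k], where J = J and z = z] by simp
  then show "intop (expansion_kernel J) (e k) z = e k z"
    using sums_single[of k "\<lambda>j. e j z"] by (rule sums_unique2)
qed

lemma eigenfunction_intop_expansion_kernel:
  "k \<in> J \<Longrightarrow> eigenfunction (intop (expansion_kernel J)) (e k)"
  unfolding eigenfunction_def
  by (auto simp: intop_expansion_kernel_basis not_AE_zero intro!: exI[of _ 1])

lemma range_closure_expansion_kernel_approx:
  assumes F: "F \<in> range_closure (intop (expansion_kernel J))" and "\<epsilon> > 0"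
  shows "\<exists>S c. finite S \<and> S \<subseteq> e ` J \<and> L2_norm (\<lambda>z. F z - (\<Sum>\<phi>\<in>S. c \<phi> * \<phi> z)) < \<epsilon>"
proof -
  from F \<open>\<epsilon> > 0\<close> obtain G where G: "G \<in> L2" and "F \<in> L2"
    and FG: "L2_norm (\<lambda>z. F z - intop (expansion_kernel J) G z) < \<epsilon> / 2"
    unfolding range_closure_def by (auto dest: spec[of _ "\<epsilon> / 2"])
  define c where "c = expansion_coeff J G"
  define P where "P n z = (\<Sum>j<n. c j * e j z)" for n z
  have sums: "(\<lambda>j. c j * e j z) sums intop (expansion_kernel J) G z" for z
    unfolding c_def by (rule intop_expansion_kernel_sums[OF G])
  have summable: "summable (\<lambda>j. (cmod (c j))\<^sup>2)"
    unfolding c_def by (rule summable_expansion_coeff_sq[OF G])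
  obtain n where n: "L2_norm (\<lambda>z. intop (expansion_kernel J) G z - P n z) < \<epsilon> / 2"
    using series_L2_approx[OF sums summable, of "\<epsilon> / 2"] \<open>\<epsilon> > 0\<close> unfolding P_def by auto
  have "(L2_norm (\<lambda>z. F z - P n z))\<^sup>2 \<le>
      2 * (L2_norm (\<lambda>z. F z - intop (expansion_kernel J) G z))\<^sup>2
      + 2 * (L2_norm (\<lambda>z. intop (expansion_kernel J) G z - P n z))\<^sup>2"
    using \<open>F \<in> L2\<close> series_L2(1)[OF sums summable] L2_sum_cmult[of c "{..<n}"]
    by (intro L2_norm_diff_sq_le) (simp_all add: P_def[abs_def])
  also have "\<dots> < 2 * (\<epsilon> / 2)\<^sup>2 + 2 * (\<epsilon> / 2)\<^sup>2"
    using FG n by (intro add_strict_mono mult_strict_left_mono power_strict_mono) (auto simp: L2_norm_def)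
  finally have "L2_norm (\<lambda>z. F z - P n z) < \<epsilon>"
    using \<open>\<epsilon> > 0\<close> by (simp add: power_divide power_less_imp_less_base[of _ 2])
  moreover have "P n z = (\<Sum>\<phi>\<in>e ` ({..<n} \<inter> J). c (inv e \<phi>) * \<phi> z)" for z
  proof -
    have "(\<Sum>\<phi>\<in>e ` ({..<n} \<inter> J). c (inv e \<phi>) * \<phi> z) = (\<Sum>j\<in>{..<n} \<inter> J. c j * e j z)"
      by (subst sum.reindex) (auto intro: inj_on_subset[OF inj] simp: inv_f_f[OF inj])
    also have "\<dots> = P n z"
      unfolding P_def by (rule sum.mono_neutral_left) (auto simp: c_def expansion_coeff_def)
    finally show ?thesis ..
  qed
  ultimately show ?thesis
    by (intro exI[of _ "e ` ({..<n} \<inter> J)"] exI[of _ "\<lambda>\<phi>. c (inv e \<phi>)"]) auto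
qed

lemma orth_basis_of_range_closure:
  "orth_basis_of (e ` J) (range_closure (intop (expansion_kernel J)))"
  unfolding orth_basis_of_def
proof (intro conjI ballI impI allI)
  show "e ` J \<subseteq> range_closure (intop (expansion_kernel J))"
  proof
    fix \<phi> assume "\<phi> \<in> e ` J"
    then obtain k where "k \<in> J" "\<phi> = e k" by auto
    then show "\<phi> \<in> range_closure (intop (expansion_kernel J))"
      unfolding range_closure_def
      by (auto simp: intop_expansion_kernel_basis L2_norm_def intro!: bexI[of _ "e k"])
  qed
next
  fix F and \<epsilon> :: real
  assume "F \<in> range_closure (intop (expansion_kernel J))" "\<epsilon> > 0"
  then show "\<exists>S c. finite S \<and> S \<subseteq> e ` J \<and> L2_norm (\<lambda>z. F z - (\<Sum>\<phi>\<in>S. c \<phi> * \<phi> z)) < \<epsilon>"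
    by (rule range_closure_expansion_kernel_approx)
qed (auto simp: not_AE_zero inner)

end

section \<open>The kernel \<open>K\<^sub>r\<^sub>,\<^sub>J\<close>\<close>

lemma L2_hermite_fun: "hermite_fun r j \<in> L2"
  using has_bochner_integral_norm_hermite_fun_sq[of r j] by (intro L2I) (auto simp: has_bochner_integral_iff)

lemma L2_inner_on_ball_hermite_fun:
  assumes "j \<noteq> k"
  shows "L2_inner_on (ball 0 R) (hermite_fun r j) (hermite_fun r k) = 0"
proof -
  have indicator_complex: "indicator (ball 0 R) z = complex_of_real (indicator (ball 0 R) z)" for z
    by (simp add: indicator_def)
  show ?thesis
    unfolding L2_inner_on_def indicator_complex
    using assms by (intro hermite_fun_orthogonal_weighted) (auto simp: indicator_def norm_mult)
qed

lemma L2_inner_hermite_fun: "L2_inner (hermite_fun r j) (hermite_fun r k) = (if j = k then 1 else 0)"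
proof (cases "j = k")
  case True
  then show ?thesis
    using L2_inner_self[of "hermite_fun r k"] has_bochner_integral_norm_hermite_fun_sq[of r k]
    by (simp add: has_bochner_integral_iff)
next
  case False
  then show ?thesis
    using hermite_fun_orthogonal_weighted[of "\<lambda>_. 1" j k r] by (simp add: L2_inner_def)
qed

interpretation hermite: L2_orthonormal_summable "hermite_fun r" for r
  by unfold_locales (simp_all add: L2_hermite_fun L2_inner_hermite_fun summable_norm_hermite_fun)

lemma infsum_eq_suminf_restrict:
  fixes f :: "nat \<Rightarrow> complex"
  assumes "summable (\<lambda>j. cmod (if j \<in> J then f j else 0))"
  shows "infsum f J = (\<Sum>j. if j \<in> J then f j else 0)"
proof -
  have "infsum f J = infsum (\<lambda>j. if j \<in> J then f j else 0) UNIV"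
    by (rule infsum_cong_neutral) auto
  also have "\<dots> = (\<Sum>j. if j \<in> J then f j else 0)"
    by (rule infsumI, rule norm_summable_imp_has_sum[OF assms])
       (rule summable_sums, rule summable_norm_cancel[OF assms])
  finally show ?thesis .
qed

lemma kernelK_eq_expansion_kernel: "kernelK r J = hermite.expansion_kernel r J"
proof (intro ext)
  fix z w
  have "exp (- pi / 2 * ((cmod z)\<^sup>2 + (cmod w)\<^sup>2)) = exp (- pi / 2 * (cmod z)\<^sup>2) * exp (- pi / 2 * (cmod w)\<^sup>2)"
    by (simp add: exp_add[symmetric] algebra_simps)
  then have "kernelK r J z w = (\<Sum>\<^sub>\<infinity>j\<in>J. hermite_fun r j z * cnj (hermite_fun r j w))"
    unfolding kernelK_def by (subst infsum_cmult_right'[symmetric]) (simp add: hermite_fun_def mult_ac)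
  also have "\<dots> = hermite.expansion_kernel r J z w"
    unfolding hermite.expansion_kernel_def
    by (rule infsum_eq_suminf_restrict,
        rule summable_comparison_test'[OF hermite.summable_norm_mult[of r z w], where N = 0])
       (simp add: norm_mult)
  finally show "kernelK r J z w = hermite.expansion_kernel r J z w" .
qed

lemma Union_disks_eq_UNIV: "\<Union>{ball (0 :: complex) R | R::real. R > 0} = UNIV"
proof (rule set_eqI, rule iffI)
  fix z :: complex
  have "z \<in> ball 0 (cmod z + 1)" by simp
  then show "z \<in> \<Union>{ball 0 R | R::real. R > 0}" by (auto intro!: exI[of _ "cmod z + 1"] add_nonneg_pos)
qed simp

lemma restr_op_UNIV: "restr_op K UNIV = intop K"
  by (simp add: restr_op_def fun_eq_iff)

theorem theorem1p5:
  fixes r :: nat and J :: "nat set"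
  assumes "J = UNIV \<or> (\<exists>N::nat. N \<ge> 1 \<and> J = {..<N})"
  shows "simultaneously_observable (kernelK r J) {ball 0 R | R::real. R > 0}"
proof -
  have T: "restr_op (kernelK r J) (\<Union>{ball 0 R | R::real. R > 0}) = intop (hermite.expansion_kernel r J)"
    by (simp add: Union_disks_eq_UNIV restr_op_UNIV kernelK_eq_expansion_kernel)
  show ?thesis
    unfolding simultaneously_observable_def Let_def T
  proof (intro exI conjI ballI impI)
    show "orth_basis_of (hermite_fun r ` J) (range_closure (intop (hermite.expansion_kernel r J)))"
      by (rule hermite.orth_basis_of_range_closure)
  next
    fix \<phi> assume "\<phi> \<in> hermite_fun r ` J"
    then show "eigenfunction (intop (hermite.expansion_kernel r J)) \<phi>"
      using hermite.eigenfunction_intop_expansion_kernel by blast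
  next
    fix A :: "complex set" and \<phi> \<psi>
    assume "A \<in> {ball 0 R | R::real. R > 0}" "\<phi> \<in> hermite_fun r ` J" "\<psi> \<in> hermite_fun r ` J" "\<phi> \<noteq> \<psi>"
    then obtain R j k where "A = ball 0 R" "\<phi> = hermite_fun r j" "\<psi> = hermite_fun r k" "j \<noteq> k"
      by blast
    then show "L2_inner_on A \<phi> \<psi> = 0"
      by (simp add: L2_inner_on_ball_hermite_fun)
  qed
qed

end
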